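(* Suppose $\lambda_0>1$. There exist positive constants $C,C'$ and an integer $N$, depending only on $T$, such that for every $k$ and every pair of admissible $(k+1)$-words $w_1,w_2$ with $d_1\ge N$ and $d_2\ge N$, the Perron–Frobenius eigenvalue $\lambda_1$ of $T_k\langle\{w_1,w_2\}\rangle$ satisfies $|\lambda_1-\lambda_0|\le C\lambda_0^{-k}\bigl(1+C'\lambda_0^{\delta}\bigr)$.
   Context: Let $\mathcal{A}$ be a finite alphabet of $r$ symbols and $T=(T_{x,y})$ an irreducible $r\times r$ matrix with entries in $\{0,1\}$ (the directed graph on $\mathcal{A}$ with an edge $x\to y$ iff $T_{y,x}=1$ is strongly connected), with Perron–Frobenius eigenvalue (spectral radius) $\lambda_0$. An admissible $k$-word is a string $a_1\cdots a_k$ with $T_{a_{i+1},a_i}=1$ for all $i$. $V_k$ is the complex vector space with basis $\{[w]\}$ indexed by admissible $k$-words; $\psi_k:V_1\to V_k$ is linear with $\psi_k([a])$ the sum of $[w]$ over admissible $k$-words beginning with $a$; $T_k:V_k\to V_k$ is linear with $T_k([a_1\cdots a_k])=\sum[a_2\cdots a_kx]$ over symbols $x$ with $a_2\cdots a_kx$ admissible. For a word $w$, $\beta w$, $\eta w$ are obtained by deleting the last, resp. first, symbol. For an admissible $(k+1)$-word $w$, $E_w:V_k\to V_k$ is linear with $E_w[\beta w]=[\eta w]$ and $E_w[u]=0$ for other admissible $k$-words $u$; for a set $\mathcal{C}$ of admissible $(k+1)$-words, $T_k\langle\mathcal{C}\rangle=T_k-\sum_{w\in\mathcal{C}}E_w$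 (a non-negative $0/1$ matrix in the word basis), whose Perron–Frobenius eigenvalue is its spectral radius. For an admissible $k$-word $u=u_1\cdots u_k$, $h(u)$ is the least non-negative integer $h$ such that $u$ is the only admissible $k$-word beginning with $u_1\cdots u_{h+1}$. For $w_1=a_0\cdots a_k$, $w_2=b_0\cdots b_k$: $d_1=h(a_1\cdots a_k)$, $h_2=h(b_1\cdots b_k)$; $W$ is the span of $\psi_k(V_1)$ and $T_k^i[a_1\cdots a_k]$, $0\le i\le d_1-1$; $d_2$ is the least non-negative integer with $T_k^{d_2}[b_1\cdots b_k]\in W$ (so $d_2\le h_2$); $\delta=h_2-d_2$. *)

theory Defs
  imports Complex_Main
begin

text \<open>Alphabet: the symbols 0..<r. The 0/1 matrix T is given as a boolean
  function, T x y meaning T_{x,y} = 1.\<close>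

definition irreducible01 :: "nat \<Rightarrow> (nat \<Rightarrow> nat \<Rightarrow> bool) \<Rightarrow> bool" where
  "irreducible01 r T \<longleftrightarrow>
     (\<forall>x<r. \<forall>y<r. (x, y) \<in> ({(a, b). a < r \<and> b < r \<and> T b a})\<^sup>*)"

definition is_eigenvalue :: "'i set \<Rightarrow> ('i \<Rightarrow> 'i \<Rightarrow> real) \<Rightarrow> complex \<Rightarrow> bool" where
  "is_eigenvalue S A l \<longleftrightarrow>
     (\<exists>v :: 'i \<Rightarrow> complex. (\<exists>i\<in>S. v i \<noteq> 0) \<and>
        (\<forall>i\<in>S. (\<Sum>j\<in>S. complex_of_real (A i j) * v j) = l * v i))"

definition spectral_radius_on :: "'i set \<Rightarrow> ('i \<Rightarrow> 'i \<Rightarrow> real) \<Rightarrow> real" where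
  "spectral_radius_on S A = Max {cmod l | l. is_eigenvalue S A l}"

definition PF_eigenvalue :: "nat \<Rightarrow> (nat \<Rightarrow> nat \<Rightarrow> bool) \<Rightarrow> real" where
  "PF_eigenvalue r T = spectral_radius_on {0..<r} (\<lambda>x y. if T x y then 1 else 0)"

definition admissible :: "nat \<Rightarrow> (nat \<Rightarrow> nat \<Rightarrow> bool) \<Rightarrow> nat \<Rightarrow> nat list \<Rightarrow> bool" where
  "admissible r T k w \<longleftrightarrow> length w = k \<and> (\<forall>a\<in>set w. a < r) \<and>
     (\<forall>i. Suc i < k \<longrightarrow> T (w ! Suc i) (w ! i))"

definition adm_words :: "nat \<Rightarrow> (nat \<Rightarrow> nat \<Rightarrow> bool) \<Rightarrow> nat \<Rightarrow> nat list set" where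
  "adm_words r T k = {w. admissible r T k w}"

text \<open>Vectors of V_k are functions on words supported on admissible k-words.
  Basis vector [u]:\<close>

definition basis_vec :: "nat list \<Rightarrow> nat list \<Rightarrow> complex" where
  "basis_vec u = (\<lambda>w. if w = u then 1 else 0)"

definition psi :: "nat \<Rightarrow> (nat \<Rightarrow> nat \<Rightarrow> bool) \<Rightarrow> nat \<Rightarrow> nat \<Rightarrow> nat list \<Rightarrow> complex" where
  "psi r T k a = (\<lambda>w. if admissible r T k w \<and> hd w = a then 1 else 0)"

text \<open>Matrix of T_k<C> in the word basis: entry (v,u) is the coefficient of [v]
  in T_k<C>[u]. T_k[u] = sum of [tl u @ [x]], and E_w with beta w = u,
  eta w = v removes exactly the word w = u @ [last v].\<close>

definition Tk_mat :: "nat \<Rightarrow> (nat \<Rightarrow> nat \<Rightarrow> bool) \<Rightarrow> nat \<Rightarrow> nat list set \<Rightarrow>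
                       nat list \<Rightarrow> nat list \<Rightarrow> real" where
  "Tk_mat r T k C v u =
     (if admissible r T k u \<and> admissible r T k v \<and> tl u = butlast v
         \<and> u @ [last v] \<notin> C then 1 else 0)"

definition Tk_op :: "nat \<Rightarrow> (nat \<Rightarrow> nat \<Rightarrow> bool) \<Rightarrow> nat \<Rightarrow>
                      (nat list \<Rightarrow> complex) \<Rightarrow> nat list \<Rightarrow> complex" where
  "Tk_op r T k f = (\<lambda>v. \<Sum>u\<in>adm_words r T k. complex_of_real (Tk_mat r T k {} v u) * f u)"

definition hh :: "nat \<Rightarrow> (nat \<Rightarrow> nat \<Rightarrow> bool) \<Rightarrow> nat \<Rightarrow> nat list \<Rightarrow> nat" where
  "hh r T k u = (LEAST h. \<forall>v. admissible r T k v \<and> take (Suc h) v = take (Suc h) u \<longrightarrow> v = u)"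

text \<open>W = span of psi_k(V_1) and T_k^i [a_1...a_k], 0 <= i <= d_1 - 1
  (complex linear span, written out).\<close>

definition W_space :: "nat \<Rightarrow> (nat \<Rightarrow> nat \<Rightarrow> bool) \<Rightarrow> nat \<Rightarrow> nat list \<Rightarrow>
                        (nat list \<Rightarrow> complex) set" where
  "W_space r T k w1 =
     {f. \<exists>c e :: nat \<Rightarrow> complex.
          f = (\<lambda>x. (\<Sum>a<r. c a * psi r T k a x)
                 + (\<Sum>i<hh r T k (tl w1). e i * ((Tk_op r T k ^^ i) (basis_vec (tl w1)) x)))}"

definition d1 :: "nat \<Rightarrow> (nat \<Rightarrow> nat \<Rightarrow> bool) \<Rightarrow> nat \<Rightarrow> nat list \<Rightarrow> nat" where
  "d1 r T k w1 = hh r T k (tl w1)"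

definition d2 :: "nat \<Rightarrow> (nat \<Rightarrow> nat \<Rightarrow> bool) \<Rightarrow> nat \<Rightarrow> nat list \<Rightarrow> nat list \<Rightarrow> nat" where
  "d2 r T k w1 w2 =
     (LEAST d. (Tk_op r T k ^^ d) (basis_vec (tl w2)) \<in> W_space r T k w1)"

definition delta :: "nat \<Rightarrow> (nat \<Rightarrow> nat \<Rightarrow> bool) \<Rightarrow> nat \<Rightarrow> nat list \<Rightarrow> nat list \<Rightarrow> nat" where
  "delta r T k w1 w2 = hh r T k (tl w2) - d2 r T k w1 w2"

end

theory Submission
  imports Defs "Jordan_Normal_Form.Spectral_Radius"
begin

text \<open>
  Removing two edges from the graph of \<open>T\<^sub>k\<close> can only lower the spectral radius, and it
  lowers it by \<open>O(\<lambda>\<^sub>0\<^sup>-\<^sup>k)\<close> uniformly in the removed words.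

  The upper bound \<open>\<lambda>\<^sub>1 \<le> \<lambda>\<^sub>0\<close> comes from the left eigenvector \<open>y(v) = z'(last v)\<close> of \<open>T\<^sub>k\<close>
  built from a positive left eigenvector \<open>z'\<close> of \<open>T\<close>. For the lower bound, \<open>p(u) = z(hd u)\<close>
  is a positive right eigenvector of \<open>T\<^sub>k\<close>, and \<open>R = T\<^sub>k - T\<^sub>k\<langle>C\<rangle>\<close> has at most two
  nonzero entries. With \<open>s = \<lambda>\<^sub>0 - c \<lambda>\<^sub>0\<^sup>-\<^sup>k\<close> and the truncated Neumann series
  \<open>q = \<Sum>\<^sub>j\<^sub><\<^sub>k s\<^sup>-\<^sup>j\<^sup>-\<^sup>1 T\<^sub>k\<^sup>j R p\<close>, the vector \<open>p - q\<close> is stretched by \<open>T\<^sub>k\<langle>C\<rangle>\<close> by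
  the factor \<open>s\<close> up to the error \<open>s\<^sup>-\<^sup>k T\<^sub>k\<^sup>k R p\<close>. Paths of length \<open>k\<close> between \<open>k\<close>-words are
  unique, so \<open>T\<^sub>k\<^sup>k\<close> is a 0/1 matrix and this error is absorbed by the slack
  \<open>(\<lambda>\<^sub>0 - s) p\<close>; pairing with \<open>y\<close> shows that \<open>q\<close> is small against \<open>p\<close>, so the positive
  part of \<open>p - q\<close> is a nonzero test vector for the Collatz--Wielandt bound. The finitely
  many \<open>k\<close> below the threshold are absorbed into the constant.
\<close>

section \<open>Matrices indexed by a finite set\<close>

definition matvec :: "'i set \<Rightarrow> ('i \<Rightarrow> 'i \<Rightarrow> real) \<Rightarrow> ('i \<Rightarrow> real) \<Rightarrow> 'i \<Rightarrow> real" where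
  "matvec S A x = (\<lambda>i. \<Sum>j\<in>S. A i j * x j)"

definition enum_mat :: "nat \<Rightarrow> (nat \<Rightarrow> 'i) \<Rightarrow> ('i \<Rightarrow> 'i \<Rightarrow> real) \<Rightarrow> complex mat" where
  "enum_mat n g A = mat n n (\<lambda>(i, j). complex_of_real (A (g i) (g j)))"

lemma enum_mat_carrier: "enum_mat n g A \<in> carrier_mat n n"
  by (simp add: enum_mat_def)

lemma enum_mat_mult_vec:
  assumes g: "bij_betw g {0..<n} S"
  shows "enum_mat n g A *\<^sub>v vec n (\<lambda>i. v (g i))
       = vec n (\<lambda>i. \<Sum>j\<in>S. complex_of_real (A (g i) j) * v j)"
proof (rule eq_vecI)
  fix i assume "i < dim_vec (vec n (\<lambda>i. \<Sum>j\<in>S. complex_of_real (A (g i) j) * v j))"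
  then have i: "i < n" by simp
  have "(enum_mat n g A *\<^sub>v vec n (\<lambda>i. v (g i))) $ i
      = (\<Sum>t\<in>{0..<n}. complex_of_real (A (g i) (g t)) * v (g t))"
    using i by (simp add: enum_mat_def scalar_prod_def)
  also have "\<dots> = (\<Sum>j\<in>S. complex_of_real (A (g i) j) * v j)"
    by (rule sum.reindex_bij_betw[OF g])
  finally show "(enum_mat n g A *\<^sub>v vec n (\<lambda>i. v (g i))) $ i
      = vec n (\<lambda>i. \<Sum>j\<in>S. complex_of_real (A (g i) j) * v j) $ i"
    using i by simp
qed (simp add: enum_mat_def)

lemma is_eigenvalue_iff_eigenvalue_enum_mat:
  assumes g: "bij_betw g {0..<n} S"
  shows "is_eigenvalue S A l \<longleftrightarrow> eigenvalue (enum_mat n g A) l"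
proof -
  have S_eq: "S = g ` {0..<n}"
    using g by (simp add: bij_betw_def)
  have ex: "(\<exists>u\<in>S. P u) \<longleftrightarrow> (\<exists>i<n. P (g i))"
    and all: "(\<forall>u\<in>S. P u) \<longleftrightarrow> (\<forall>i<n. P (g i))" for P
    unfolding S_eq by auto
  define gi where "gi = the_inv_into {0..<n} g"
  have gi: "gi (g i) = i" if "i < n" for i
    using g that by (auto simp: gi_def bij_betw_def the_inv_into_f_f)
  have eigvec_iff: "eigenvector (enum_mat n g A) (vec n (\<lambda>i. v (g i))) l \<longleftrightarrow>
      (\<exists>i\<in>S. v i \<noteq> 0) \<and> (\<forall>i\<in>S. (\<Sum>j\<in>S. complex_of_real (A i j) * v j) = l * v i)" for v
    unfolding eigenvector_def enum_mat_mult_vec[OF g] ex all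
    by (auto simp: enum_mat_def vec_eq_iff)
  show ?thesis
  proof
    assume "is_eigenvalue S A l"
    then obtain v where "(\<exists>i\<in>S. v i \<noteq> 0) \<and>
        (\<forall>i\<in>S. (\<Sum>j\<in>S. complex_of_real (A i j) * v j) = l * v i)"
      unfolding is_eigenvalue_def by blast
    then have "eigenvector (enum_mat n g A) (vec n (\<lambda>i. v (g i))) l"
      by (rule eigvec_iff[of v, THEN iffD2])
    then show "eigenvalue (enum_mat n g A) l"
      unfolding eigenvalue_def by blast
  next
    assume "eigenvalue (enum_mat n g A) l"
    then obtain w where w: "eigenvector (enum_mat n g A) w l"
      unfolding eigenvalue_def by blast
    define v where "v u = w $ gi u" for u
    have "dim_vec w = n"
      using w enum_mat_carrier[of n g A] unfolding eigenvector_def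
      by (metis carrier_matD(1) carrier_vecD)
    then have "vec n (\<lambda>i. v (g i)) = w"
      by (intro eq_vecI) (simp_all add: v_def gi)
    with w have "eigenvector (enum_mat n g A) (vec n (\<lambda>i. v (g i))) l"
      by simp
    then show "is_eigenvalue S A l"
      unfolding is_eigenvalue_def eigvec_iff[of v] by blast
  qed
qed

lemma spectrum_enum_mat:
  assumes "bij_betw g {0..<n} S"
  shows "spectrum (enum_mat n g A) = {l. is_eigenvalue S A l}"
  using is_eigenvalue_iff_eigenvalue_enum_mat[OF assms] by (auto simp: spectrum_def)

lemma finite_eigenvalues:
  assumes "finite S"
  shows "finite {l. is_eigenvalue S A l}"
proof -
  obtain g where g: "bij_betw g {0..<card S} S"
    using ex_bij_betw_nat_finite[OF assms] by blast
  have "finite (spectrum (enum_mat (card S) g A))"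
    by (rule card_finite_spectrum(1)[OF enum_mat_carrier])
  then show ?thesis
    unfolding spectrum_enum_mat[OF g] .
qed

lemma ex_eigenvalue:
  assumes "finite S" "S \<noteq> {}"
  shows "\<exists>l. is_eigenvalue S A l"
proof -
  obtain g where g: "bij_betw g {0..<card S} S"
    using ex_bij_betw_nat_finite[OF assms(1)] by blast
  have "card S > 0"
    using assms by (simp add: card_gt_0_iff)
  then have "spectrum (enum_mat (card S) g A) \<noteq> {}"
    by (rule spectrum_non_empty[OF enum_mat_carrier])
  then show ?thesis
    unfolding spectrum_enum_mat[OF g] by blast
qed

lemma spectral_radius_on_attained:
  assumes "finite S" "S \<noteq> {}"
  obtains l where "is_eigenvalue S A l" "cmod l = spectral_radius_on S A"
proof -
  have "spectral_radius_on S A \<in> {cmod l | l. is_eigenvalue S A l}"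
    unfolding spectral_radius_on_def
    using finite_eigenvalues[OF assms(1)] ex_eigenvalue[OF assms]
    by (intro Max_in) (auto simp: setcompr_eq_image)
  then obtain l where "is_eigenvalue S A l" "spectral_radius_on S A = cmod l"
    by blast
  then show ?thesis
    using that by simp
qed

lemma norm_le_spectral_radius_on:
  assumes "finite S" "is_eigenvalue S A l"
  shows "cmod l \<le> spectral_radius_on S A"
  unfolding spectral_radius_on_def
  using assms finite_eigenvalues[OF assms(1)] by (intro Max_ge) (auto simp: setcompr_eq_image)

lemma spectral_radius_on_nonneg:
  assumes "finite S" "S \<noteq> {}"
  shows "spectral_radius_on S A \<ge> 0"
  using spectral_radius_on_attained[OF assms, of A] by (metis norm_ge_zero)

lemma is_eigenvalue_transpose:
  assumes "finite S"
  shows "is_eigenvalue S (\<lambda>i j. A j i) l \<longleftrightarrow> is_eigenvalue S A l"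
proof -
  obtain g where g: "bij_betw g {0..<card S} S"
    using ex_bij_betw_nat_finite[OF assms] by blast
  have tr: "enum_mat (card S) g (\<lambda>i j. A j i) = transpose_mat (enum_mat (card S) g A)"
    by (rule eq_matI) (auto simp: enum_mat_def)
  show ?thesis
    unfolding is_eigenvalue_iff_eigenvalue_enum_mat[OF g] tr
      eigenvalue_root_char_poly[OF enum_mat_carrier]
      eigenvalue_root_char_poly[OF transpose_carrier_mat[THEN iffD2, OF enum_mat_carrier]]
    by (simp add: char_poly_transpose_mat[OF enum_mat_carrier])
qed

lemma spectral_radius_on_transpose:
  assumes "finite S"
  shows "spectral_radius_on S (\<lambda>i j. A j i) = spectral_radius_on S A"
  unfolding spectral_radius_on_def is_eigenvalue_transpose[OF assms, of A] ..

section \<open>Nonnegative matrices\<close>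

lemma matvec_cong: "(\<And>j. j \<in> S \<Longrightarrow> x j = y j) \<Longrightarrow> matvec S A x i = matvec S A y i"
  unfolding matvec_def by (rule sum.cong) auto

lemma matvec_linear: "matvec S A (\<lambda>i. c * x i + y i) = (\<lambda>i. c * matvec S A x i + matvec S A y i)"
  unfolding matvec_def by (simp add: algebra_simps sum.distrib sum_distrib_left)

lemma matvec_scale: "matvec S A (\<lambda>i. c * x i) i = c * matvec S A x i"
  unfolding matvec_def by (simp add: sum_distrib_left mult.left_commute)

lemma matvec_pow_linear:
  "(matvec S A ^^ m) (\<lambda>i. c * x i + y i) = (\<lambda>i. c * (matvec S A ^^ m) x i + (matvec S A ^^ m) y i)"
  by (induction m) (simp_all add: matvec_linear)

lemma matvec_sum: "matvec S A (\<lambda>i. \<Sum>m\<in>I. f m i) = (\<lambda>i. \<Sum>m\<in>I. matvec S A (f m) i)"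
  unfolding matvec_def by (simp add: sum_distrib_left sum.swap[of _ I])

lemma matvec_nonneg:
  assumes "\<And>j. j \<in> S \<Longrightarrow> A i j \<ge> 0" "\<And>j. j \<in> S \<Longrightarrow> x j \<ge> 0"
  shows "matvec S A x i \<ge> 0"
  unfolding matvec_def using assms by (auto intro!: sum_nonneg)

lemma matvec_pow_nonneg:
  assumes "\<And>i j. i \<in> S \<Longrightarrow> j \<in> S \<Longrightarrow> A i j \<ge> 0" "\<And>j. j \<in> S \<Longrightarrow> x j \<ge> 0" "i \<in> S"
  shows "(matvec S A ^^ m) x i \<ge> 0"
  using assms(3) by (induction m arbitrary: i) (auto intro: assms(2) matvec_nonneg assms(1))

lemma matvec_mono:
  assumes "\<And>j. j \<in> S \<Longrightarrow> A i j \<ge> 0" "\<And>j. j \<in> S \<Longrightarrow> x j \<le> y j"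
  shows "matvec S A x i \<le> matvec S A y i"
  unfolding matvec_def using assms by (auto intro!: sum_mono mult_left_mono)

lemma matvec_ge_entry:
  assumes "finite S" "\<And>j. j \<in> S \<Longrightarrow> A i j \<ge> 0" "\<And>j. j \<in> S \<Longrightarrow> x j \<ge> 0" "j \<in> S"
  shows "A i j * x j \<le> matvec S A x i"
  unfolding matvec_def using assms by (intro member_le_sum) auto

lemma matvec_pow_ge:
  assumes A0: "\<And>i j. i \<in> S \<Longrightarrow> j \<in> S \<Longrightarrow> A i j \<ge> 0" and "t \<ge> 0"
    and Ax: "\<And>i. i \<in> S \<Longrightarrow> t * x i \<le> matvec S A x i" and "i \<in> S"
  shows "t ^ k * x i \<le> (matvec S A ^^ k) x i"
  using \<open>i \<in> S\<close>
proof (induction k arbitrary: i)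
  case (Suc k)
  have "t ^ Suc k * x i = t ^ k * (t * x i)"
    by simp
  also have "\<dots> \<le> t ^ k * matvec S A x i"
    using Ax[OF Suc.prems] \<open>t \<ge> 0\<close> by (simp add: mult_left_mono)
  also have "\<dots> = matvec S A (\<lambda>j. t ^ k * x j) i"
    by (simp add: matvec_scale)
  also have "\<dots> \<le> matvec S A ((matvec S A ^^ k) x) i"
    using A0 Suc by (intro matvec_mono) auto
  finally show ?case
    by simp
qed simp

lemma enum_mat_pow_mult_vec:
  assumes g: "bij_betw g {0..<n} S"
  shows "enum_mat n g A ^\<^sub>m k *\<^sub>v vec n (\<lambda>i. complex_of_real (x (g i)))
       = vec n (\<lambda>i. complex_of_real ((matvec S A ^^ k) x (g i)))"
proof (induction k arbitrary: x)
  case 0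
  show ?case
    by (simp add: enum_mat_def)
next
  case (Suc k)
  have "enum_mat n g A *\<^sub>v vec n (\<lambda>i. complex_of_real (x (g i)))
      = vec n (\<lambda>i. complex_of_real (matvec S A x (g i)))"
    using enum_mat_mult_vec[OF g, of A "\<lambda>j. complex_of_real (x j)"] by (simp add: matvec_def)
  have B: "enum_mat n g A \<in> carrier_mat n n"
    by (rule enum_mat_carrier)
  have "enum_mat n g A ^\<^sub>m Suc k *\<^sub>v vec n (\<lambda>i. complex_of_real (x (g i)))
      = enum_mat n g A ^\<^sub>m k *\<^sub>v (enum_mat n g A *\<^sub>v vec n (\<lambda>i. complex_of_real (x (g i))))"
    using assoc_mult_mat_vec[OF pow_carrier_mat[OF B] B] by simp
  with \<open>enum_mat n g A *\<^sub>v _ = _\<close> show ?case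
    using Suc[of "matvec S A x"] by (simp add: funpow_swap1)
qed

lemma is_eigenvalue_divide:
  assumes c: "c \<noteq> 0" and l: "is_eigenvalue S (\<lambda>i j. A i j / c) l"
  shows "is_eigenvalue S A (complex_of_real c * l)"
proof -
  obtain v where v: "\<exists>i\<in>S. v i \<noteq> 0"
    "\<forall>i\<in>S. (\<Sum>j\<in>S. complex_of_real (A i j / c) * v j) = l * v i"
    using l unfolding is_eigenvalue_def by blast
  have "(\<Sum>j\<in>S. complex_of_real (A i j) * v j) = complex_of_real c * l * v i" if "i \<in> S" for i
  proof -
    have "(\<Sum>j\<in>S. complex_of_real (A i j) * v j)
        = complex_of_real c * (\<Sum>j\<in>S. complex_of_real (A i j / c) * v j)"
      using c by (simp add: sum_distrib_left field_simps)
    then show ?thesis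
      using v(2) that by simp
  qed
  then show ?thesis
    using v(1) unfolding is_eigenvalue_def by blast
qed

lemma matvec_pow_bounded:
  assumes fin: "finite S" and lt: "spectral_radius_on S A < 1"
  obtains c where "\<And>k i. i \<in> S \<Longrightarrow> \<bar>(matvec S A ^^ k) x i\<bar> \<le> c * (\<Sum>j\<in>S. \<bar>x j\<bar>)"
proof (cases "S = {}")
  case True
  show ?thesis
    by (rule that) (simp add: True)
next
  case False
  obtain g where g: "bij_betw g {0..<card S} S"
    using ex_bij_betw_nat_finite[OF fin] by blast
  define B where "B = enum_mat (card S) g A"
  have n0: "card S > 0"
    using fin False by (simp add: card_gt_0_iff)
  have "spectral_radius B \<in> cmod ` spectrum B"
    unfolding B_def by (rule spectral_radius_mem_max(1)[OF enum_mat_carrier n0])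
  then obtain l where l: "is_eigenvalue S A l" "spectral_radius B = cmod l"
    using spectrum_enum_mat[OF g, of A] by (auto simp: B_def)
  then have "spectral_radius B < 1"
    using norm_le_spectral_radius_on[OF fin l(1)] lt by simp
  then obtain c where c: "\<And>k. norm_bound (B ^\<^sub>m k) c"
    using spectral_radius_jnf_norm_bound_less_1_upper_triangular[OF enum_mat_carrier]
    unfolding B_def by blast
  have gS: "g j \<in> S" if "j < card S" for j
    using g that by (auto simp: bij_betw_def)
  have "\<bar>(matvec S A ^^ k) x i\<bar> \<le> c * (\<Sum>j\<in>S. \<bar>x j\<bar>)" if i: "i \<in> S" for k i
  proof -
    let ?C = "B ^\<^sub>m k"
    have "i \<in> g ` {0..<card S}"
      using g i by (simp add: bij_betw_def)
    then obtain i0 where i0: "i0 < card S" "g i0 = i"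
      by auto
    have dims: "dim_row ?C = card S" "dim_col ?C = card S"
      using pow_carrier_mat[OF enum_mat_carrier[of "card S" g A], of k] by (auto simp: B_def)
    have "complex_of_real ((matvec S A ^^ k) x i)
        = (?C *\<^sub>v vec (card S) (\<lambda>j. complex_of_real (x (g j)))) $ i0"
      using enum_mat_pow_mult_vec[OF g, of A k x] i0 by (simp add: B_def)
    also have "\<dots> = (\<Sum>j<card S. ?C $$ (i0, j) * complex_of_real (x (g j)))"
      using i0 dims by (simp add: scalar_prod_def lessThan_atLeast0)
    finally have "\<bar>(matvec S A ^^ k) x i\<bar>
        = cmod (\<Sum>j<card S. ?C $$ (i0, j) * complex_of_real (x (g j)))"
      by (metis norm_of_real)
    also have "\<dots> \<le> (\<Sum>j<card S. cmod (?C $$ (i0, j)) * \<bar>x (g j)\<bar>)"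
      by (rule order_trans[OF norm_sum]) (simp add: norm_mult)
    also have "\<dots> \<le> (\<Sum>j<card S. c * \<bar>x (g j)\<bar>)"
      using c[of k] i0 dims by (intro sum_mono mult_right_mono) (auto simp: norm_bound_def)
    also have "\<dots> = c * (\<Sum>j<card S. \<bar>x (g j)\<bar>)"
      by (simp add: sum_distrib_left)
    also have "\<dots> = c * (\<Sum>j\<in>S. \<bar>x j\<bar>)"
      using sum.reindex_bij_betw[OF g, of "\<lambda>j. \<bar>x j\<bar>"] by (simp add: lessThan_atLeast0)
    finally show ?thesis .
  qed
  then show ?thesis
    by (rule that)
qed

text \<open>Collatz--Wielandt bound: if \<open>\<rho>(A) < s' < s\<close>, the powers of \<open>A / s'\<close> stay bounded,
  while they stretch \<open>x\<close> geometrically.\<close>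

lemma spectral_radius_on_geI:
  assumes fin: "finite S"
    and A0: "\<And>i j. i \<in> S \<Longrightarrow> j \<in> S \<Longrightarrow> A i j \<ge> 0"
    and x0: "\<And>i. i \<in> S \<Longrightarrow> x i \<ge> 0" and v0: "v0 \<in> S" "x v0 > 0"
    and s: "s > 0"
    and Ax: "\<And>i. i \<in> S \<Longrightarrow> s * x i \<le> matvec S A x i"
  shows "s \<le> spectral_radius_on S A"
proof (rule ccontr)
  assume lt: "\<not> s \<le> spectral_radius_on S A"
  define s' where "s' = (spectral_radius_on S A + s) / 2"
  have Sne: "S \<noteq> {}"
    using v0 by blast
  have s': "spectral_radius_on S A < s'" "s' < s" "s' > 0"
    using lt spectral_radius_on_nonneg[OF fin Sne, of A] by (auto simp: s'_def)
  define A' where "A' = (\<lambda>i j. A i j / s')"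
  define t where "t = s / s'"
  have t: "t > 1"
    using s' by (simp add: t_def)
  obtain l where l: "is_eigenvalue S A' l" "cmod l = spectral_radius_on S A'"
    by (rule spectral_radius_on_attained[OF fin Sne])
  have "s' * cmod l \<le> spectral_radius_on S A"
    using norm_le_spectral_radius_on[OF fin is_eigenvalue_divide[of s' S A l]] l(1) s'(3)
    by (simp add: A'_def norm_mult)
  then have "s' * cmod l < s' * 1"
    using s'(1) by simp
  then have "spectral_radius_on S A' < 1"
    using s'(3) l(2) by (simp only: mult_less_cancel_left_pos)
  then obtain c where c: "\<And>k i. i \<in> S \<Longrightarrow> \<bar>(matvec S A' ^^ k) x i\<bar> \<le> c * (\<Sum>j\<in>S. \<bar>x j\<bar>)"
    using matvec_pow_bounded[OF fin] by blast
  have grow: "t ^ k * x v0 \<le> (matvec S A' ^^ k) x v0" for k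
  proof (rule matvec_pow_ge[OF _ _ _ v0(1)])
    fix i assume i: "i \<in> S"
    have "matvec S A' x i = matvec S A x i / s'"
      by (simp add: A'_def matvec_def sum_divide_distrib)
    then show "t * x i \<le> matvec S A' x i"
      using divide_right_mono[OF Ax[OF i], of s'] s' by (simp add: t_def)
  qed (use A0 s' t in \<open>auto simp: A'_def\<close>)
  have abs_x: "(\<Sum>j\<in>S. \<bar>x j\<bar>) = (\<Sum>j\<in>S. x j)"
    using x0 by (intro sum.cong) auto
  obtain k where "c * (\<Sum>j\<in>S. x j) / x v0 < t ^ k"
    using real_arch_pow[OF t] by blast
  then have "c * (\<Sum>j\<in>S. x j) < t ^ k * x v0"
    using v0(2) by (simp add: pos_divide_less_eq)
  moreover have "\<bar>(matvec S A' ^^ k) x v0\<bar> \<le> c * (\<Sum>j\<in>S. x j)"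
    using c[OF v0(1), of k] abs_x by simp
  ultimately show False
    using grow[of k] abs_ge_self[of "(matvec S A' ^^ k) x v0"] by linarith
qed

lemma spectral_radius_on_le_left_eigenvalue:
  assumes fin: "finite S" and Sne: "S \<noteq> {}"
    and A0: "\<And>i j. i \<in> S \<Longrightarrow> j \<in> S \<Longrightarrow> 0 \<le> A i j"
    and AM: "\<And>i j. i \<in> S \<Longrightarrow> j \<in> S \<Longrightarrow> A i j \<le> M i j"
    and y0: "\<And>i. i \<in> S \<Longrightarrow> y i > 0"
    and yM: "\<And>j. j \<in> S \<Longrightarrow> (\<Sum>i\<in>S. y i * M i j) = lam * y j"
  shows "spectral_radius_on S A \<le> lam"
proof -
  obtain l where "is_eigenvalue S A l" and l: "cmod l = spectral_radius_on S A"
    using spectral_radius_on_attained[OF fin Sne] by blast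
  then obtain v where v: "\<exists>i\<in>S. v i \<noteq> 0"
    "\<forall>i\<in>S. (\<Sum>j\<in>S. complex_of_real (A i j) * v j) = l * v i"
    unfolding is_eigenvalue_def by blast
  define x where "x i = cmod (v i)" for i
  have Mx: "cmod l * x i \<le> matvec S M x i" if i: "i \<in> S" for i
  proof -
    have "cmod l * x i = cmod (\<Sum>j\<in>S. complex_of_real (A i j) * v j)"
      using v(2) i by (simp add: x_def norm_mult)
    also have "\<dots> \<le> (\<Sum>j\<in>S. cmod (complex_of_real (A i j) * v j))"
      by (rule norm_sum)
    also have "\<dots> = (\<Sum>j\<in>S. A i j * x j)"
      by (rule sum.cong) (auto simp: norm_mult A0 i x_def)
    also have "\<dots> \<le> matvec S M x i"
      unfolding matvec_def using AM[OF i] by (auto intro!: sum_mono mult_right_mono simp: x_def)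
    finally show ?thesis .
  qed
  have "cmod l * (\<Sum>i\<in>S. y i * x i) = (\<Sum>i\<in>S. y i * (cmod l * x i))"
    by (simp add: sum_distrib_left algebra_simps)
  also have "\<dots> \<le> (\<Sum>i\<in>S. y i * matvec S M x i)"
    using Mx y0 by (intro sum_mono mult_left_mono) (auto intro: less_imp_le)
  also have "\<dots> = (\<Sum>i\<in>S. \<Sum>j\<in>S. y i * M i j * x j)"
    unfolding matvec_def by (simp add: sum_distrib_left mult.assoc)
  also have "\<dots> = (\<Sum>j\<in>S. \<Sum>i\<in>S. y i * M i j * x j)"
    by (rule sum.swap)
  also have "\<dots> = (\<Sum>j\<in>S. (\<Sum>i\<in>S. y i * M i j) * x j)"
    by (simp add: sum_distrib_right)
  also have "\<dots> = lam * (\<Sum>j\<in>S. y j * x j)"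
    using yM by (simp add: sum_distrib_left algebra_simps)
  finally have le: "cmod l * (\<Sum>i\<in>S. y i * x i) \<le> lam * (\<Sum>j\<in>S. y j * x j)" .
  obtain i0 where i0: "i0 \<in> S" "v i0 \<noteq> 0"
    using v(1) by blast
  have "0 < y i0 * x i0"
    using y0[OF i0(1)] i0(2) by (simp add: x_def)
  also have "\<dots> \<le> (\<Sum>i\<in>S. y i * x i)"
    using fin i0 by (intro member_le_sum) (auto simp: x_def intro!: mult_nonneg_nonneg less_imp_le[OF y0])
  finally show ?thesis
    using le l by simp
qed

lemma spectral_radius_on_le_card:
  assumes "finite S" "S \<noteq> {}" "\<And>i j. i \<in> S \<Longrightarrow> j \<in> S \<Longrightarrow> 0 \<le> A i j \<and> A i j \<le> 1"
  shows "spectral_radius_on S A \<le> card S"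
  using spectral_radius_on_le_left_eigenvalue[of S A "\<lambda>_ _. 1" "\<lambda>_. 1" "card S"] assms by simp

text \<open>Strong connectivity of the graph with an edge \<open>i \<rightarrow> j\<close> whenever \<open>A j i > 0\<close>, the
  direction in which \<open>matvec\<close> propagates positivity.\<close>

definition irreducible_on :: "'i set \<Rightarrow> ('i \<Rightarrow> 'i \<Rightarrow> real) \<Rightarrow> bool" where
  "irreducible_on S A \<longleftrightarrow>
     (\<forall>Q. Q \<subseteq> S \<longrightarrow> Q \<noteq> {} \<longrightarrow> (\<forall>i\<in>Q. \<forall>j\<in>S. 0 < A j i \<longrightarrow> j \<in> Q) \<longrightarrow> Q = S)"

lemma irreducible_onI:
  assumes "\<And>i j. i \<in> S \<Longrightarrow> j \<in> S \<Longrightarrow> (i, j) \<in> {(i, j). i \<in> S \<and> j \<in> S \<and> 0 < A j i}\<^sup>*"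
  shows "irreducible_on S A"
  unfolding irreducible_on_def
proof (intro allI impI)
  fix Q assume Q: "Q \<subseteq> S" "Q \<noteq> {}" "\<forall>i\<in>Q. \<forall>j\<in>S. 0 < A j i \<longrightarrow> j \<in> Q"
  obtain q where q: "q \<in> Q"
    using Q(2) by blast
  have "j \<in> Q" if "j \<in> S" for j
    using assms[of q j] q Q that
  proof -
    have "(q, j) \<in> {(i, j). i \<in> S \<and> j \<in> S \<and> 0 < A j i}\<^sup>*"
      using assms[of q j] q Q(1) that by blast
    then show ?thesis
      by (induction rule: rtrancl_induct) (use q Q(3) in auto)
  qed
  then show "Q = S"
    using Q(1) by blast
qed

lemma irreducible_on_sum_pow_pos:
  assumes fin: "finite S"
    and A0: "\<And>i j. i \<in> S \<Longrightarrow> j \<in> S \<Longrightarrow> 0 \<le> A i j"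
    and irr: "irreducible_on S A"
    and d0: "\<And>i. i \<in> S \<Longrightarrow> 0 \<le> d i" and i1: "i1 \<in> S" "0 < d i1"
  obtains N where "\<And>i. i \<in> S \<Longrightarrow> 0 < (\<Sum>m\<le>N. (matvec S A ^^ m) d i)"
proof -
  define Q where "Q = {i \<in> S. \<exists>m. 0 < (matvec S A ^^ m) d i}"
  have pow0: "0 \<le> (matvec S A ^^ m) d i" if "i \<in> S" for m i
    using matvec_pow_nonneg[OF A0 d0 that] .
  have "Q = S"
  proof (rule irr[unfolded irreducible_on_def, rule_format])
    show "Q \<subseteq> S"
      by (auto simp: Q_def)
    show "Q \<noteq> {}"
      using i1 by (auto simp: Q_def intro!: exI[of _ 0])
    fix i j assume i: "i \<in> Q" and j: "j \<in> S" and Aji: "0 < A j i"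
    obtain m where m: "i \<in> S" "0 < (matvec S A ^^ m) d i"
      using i by (auto simp: Q_def)
    have "0 < A j i * (matvec S A ^^ m) d i"
      using Aji m by simp
    also have "\<dots> \<le> matvec S A ((matvec S A ^^ m) d) j"
      by (rule matvec_ge_entry[OF fin]) (use A0 j pow0 m(1) in auto)
    also have "\<dots> = (matvec S A ^^ Suc m) d j"
      by simp
    finally show "j \<in> Q"
      using j unfolding Q_def by blast
  qed
  then have "\<forall>i\<in>S. \<exists>m. 0 < (matvec S A ^^ m) d i"
    unfolding Q_def by blast
  then obtain mi where mi: "\<forall>i\<in>S. 0 < (matvec S A ^^ mi i) d i"
    by (rule bchoice[THEN exE])
  have "0 < (\<Sum>m\<le>Max (mi ` S). (matvec S A ^^ m) d i)" if i: "i \<in> S" for i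
  proof -
    have "mi i \<le> Max (mi ` S)"
      using fin i by simp
    then have "(matvec S A ^^ mi i) d i \<le> (\<Sum>m\<le>Max (mi ` S). (matvec S A ^^ m) d i)"
      using pow0 i by (intro member_le_sum) auto
    moreover have "0 < (matvec S A ^^ mi i) d i"
      using mi i by blast
    ultimately show ?thesis
      by linarith
  qed
  then show ?thesis
    using that by blast
qed

text \<open>A strict inequality at one index spreads along the powers of \<open>A\<close> to all indices, so
  \<open>y = \<Sum>\<^sub>m\<^sub>\<le>\<^sub>N A\<^sup>m x\<close> satisfies \<open>A y \<ge> (\<rho>(A) + \<eta>) y\<close>, contradicting Collatz--Wielandt.\<close>

lemma irreducible_on_subinvariant_eq:
  assumes fin: "finite S"
    and A0: "\<And>i j. i \<in> S \<Longrightarrow> j \<in> S \<Longrightarrow> 0 \<le> A i j"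
    and irr: "irreducible_on S A"
    and x0: "\<And>i. i \<in> S \<Longrightarrow> 0 \<le> x i" and i0: "i0 \<in> S" "0 < x i0"
    and sub: "\<And>i. i \<in> S \<Longrightarrow> spectral_radius_on S A * x i \<le> matvec S A x i"
    and i: "i \<in> S"
  shows "matvec S A x i = spectral_radius_on S A * x i"
proof (rule ccontr)
  assume neq: "\<not> ?thesis"
  let ?\<rho> = "spectral_radius_on S A"
  define d where "d i = matvec S A x i - ?\<rho> * x i" for i
  have d0: "\<And>i. i \<in> S \<Longrightarrow> 0 \<le> d i"
    using sub by (simp add: d_def)
  have "0 < d i"
    using d0[OF i] neq by (simp add: d_def)
  then obtain N where E0: "\<And>i. i \<in> S \<Longrightarrow> 0 < (\<Sum>m\<le>N. (matvec S A ^^ m) d i)"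
    using irreducible_on_sum_pow_pos[of S A d i, OF fin A0 irr d0 i] by blast
  define y where "y = (\<lambda>i. \<Sum>m\<le>N. (matvec S A ^^ m) x i)"
  define E where "E = (\<lambda>i. \<Sum>m\<le>N. (matvec S A ^^ m) d i)"
  have Ay: "matvec S A y = (\<lambda>i. ?\<rho> * y i + E i)"
  proof -
    have "matvec S A x = (\<lambda>i. ?\<rho> * x i + d i)"
      by (simp add: d_def fun_eq_iff matvec_def)
    then have "matvec S A ((matvec S A ^^ m) x)
        = (\<lambda>i. ?\<rho> * (matvec S A ^^ m) x i + (matvec S A ^^ m) d i)" for m
      by (simp add: funpow_swap1 matvec_pow_linear)
    then show ?thesis
      unfolding y_def E_def matvec_sum by (simp add: sum.distrib sum_distrib_left)
  qed
  have y0: "\<And>i. i \<in> S \<Longrightarrow> 0 \<le> y i"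
    unfolding y_def using matvec_pow_nonneg[of S A x, OF A0 x0] by (auto intro: sum_nonneg)
  have "(matvec S A ^^ 0) x i0 \<le> y i0"
    unfolding y_def using matvec_pow_nonneg[of S A x, OF A0 x0 i0(1)] by (intro member_le_sum) auto
  then have yi0: "0 < y i0"
    using i0 by simp
  define \<eta> where "\<eta> = Min (E ` S) / Max (y ` S)"
  have Emin: "0 < Min (E ` S)"
    using fin i0 E0 by (subst Min_gr_iff) (auto simp: E_def)
  have "y i0 \<le> Max (y ` S)"
    using fin i0 by simp
  then have ymax: "0 < Max (y ` S)"
    using yi0 by linarith
  then have \<eta>: "0 < \<eta>"
    using Emin by (simp add: \<eta>_def)
  have stretch: "(?\<rho> + \<eta>) * y i \<le> matvec S A y i" if i: "i \<in> S" for i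
  proof -
    have "\<eta> * y i \<le> \<eta> * Max (y ` S)"
      using fin i \<eta> by (intro mult_left_mono) auto
    also have "\<dots> \<le> E i"
      using ymax fin i by (simp add: \<eta>_def)
    finally show ?thesis
      using Ay by (simp add: algebra_simps)
  qed
  have "S \<noteq> {}"
    using i0 by blast
  then have "0 < ?\<rho> + \<eta>"
    using spectral_radius_on_nonneg[OF fin, of A] \<eta> by linarith
  then have "?\<rho> + \<eta> \<le> ?\<rho>"
    using spectral_radius_on_geI[of S A y i0 "?\<rho> + \<eta>", OF fin A0 y0 i0(1) yi0 _ stretch]
    by blast
  then show False
    using \<eta> by simp
qed

lemma perron_frobenius_eigenvector:
  assumes fin: "finite S" and Sne: "S \<noteq> {}"
    and A0: "\<And>i j. i \<in> S \<Longrightarrow> j \<in> S \<Longrightarrow> 0 \<le> A i j"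
    and irr: "irreducible_on S A"
  obtains x where "\<And>i. i \<in> S \<Longrightarrow> 0 < x i"
    and "\<And>i. i \<in> S \<Longrightarrow> matvec S A x i = spectral_radius_on S A * x i"
proof -
  let ?\<rho> = "spectral_radius_on S A"
  obtain l where "is_eigenvalue S A l" and l: "cmod l = ?\<rho>"
    using spectral_radius_on_attained[OF fin Sne] by blast
  then obtain v where v: "\<exists>i\<in>S. v i \<noteq> 0"
    "\<forall>i\<in>S. (\<Sum>j\<in>S. complex_of_real (A i j) * v j) = l * v i"
    unfolding is_eigenvalue_def by blast
  define x where "x i = cmod (v i)" for i
  have x0: "\<And>i. i \<in> S \<Longrightarrow> 0 \<le> x i"
    by (simp add: x_def)
  obtain i0 where i0: "i0 \<in> S" "0 < x i0"
    using v(1) by (auto simp: x_def)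
  have sub: "?\<rho> * x i \<le> matvec S A x i" if i: "i \<in> S" for i
  proof -
    have "?\<rho> * x i = cmod (\<Sum>j\<in>S. complex_of_real (A i j) * v j)"
      using v(2) i l by (simp add: x_def norm_mult)
    also have "\<dots> \<le> (\<Sum>j\<in>S. cmod (complex_of_real (A i j) * v j))"
      by (rule norm_sum)
    also have "\<dots> = matvec S A x i"
      unfolding matvec_def by (rule sum.cong) (auto simp: norm_mult A0 i x_def)
    finally show ?thesis .
  qed
  have eig: "matvec S A x i = ?\<rho> * x i" if "i \<in> S" for i
    using irreducible_on_subinvariant_eq[of S A x i0, OF fin A0 irr x0 i0 sub that] .
  have pow: "(matvec S A ^^ m) x i = ?\<rho> ^ m * x i" if "i \<in> S" for m i
    using that
  proof (induction m arbitrary: i)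
    case (Suc m)
    have "(matvec S A ^^ Suc m) x i = matvec S A (\<lambda>j. ?\<rho> ^ m * x j) i"
      using Suc.IH by (auto intro: matvec_cong)
    also have "\<dots> = ?\<rho> ^ Suc m * x i"
      using eig[OF Suc.prems] by (simp add: matvec_scale)
    finally show ?case .
  qed simp
  obtain N where "\<And>i. i \<in> S \<Longrightarrow> 0 < (\<Sum>m\<le>N. (matvec S A ^^ m) x i)"
    using irreducible_on_sum_pow_pos[of S A x i0, OF fin A0 irr x0 i0] by blast
  then have pos: "0 < (\<Sum>m\<le>N. ?\<rho> ^ m) * x i" if "i \<in> S" for i
    using that by (simp add: pow sum_distrib_right)
  have "0 < x i" if "i \<in> S" for i
    using pos[OF that] x0[OF that] by (auto simp: zero_less_mult_iff)
  then show ?thesis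
    using that eig by blast
qed

section \<open>Removing entries from a nonnegative matrix\<close>

lemma power_diff_ge_half:
  fixes lam eps :: real
  assumes lam: "0 < lam" and eps: "0 \<le> eps" and small: "2 * real k * eps \<le> lam"
  shows "lam ^ k \<le> 2 * (lam - eps) ^ k"
proof (cases "k = 0")
  case False
  have "1 * eps \<le> 2 * real k * eps"
    using False eps by (intro mult_right_mono) auto
  then have "eps / lam \<le> 1"
    using small lam by simp
  then have "1 - real k * (eps / lam) \<le> (1 - eps / lam) ^ k"
    using Bernoulli_inequality[of "- (eps / lam)" k] by simp
  moreover have "1 / 2 \<le> 1 - real k * (eps / lam)"
    using small lam by (simp add: field_simps)
  ultimately have "1 / 2 \<le> (1 - eps / lam) ^ k"
    by linarith
  then have "lam ^ k * (1 / 2) \<le> lam ^ k * (1 - eps / lam) ^ k"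
    using lam by (intro mult_left_mono) auto
  also have "\<dots> = (lam - eps) ^ k"
    using lam by (simp add: power_mult_distrib[symmetric] field_simps)
  finally show ?thesis
    by simp
qed simp

lemma sum_power_ratio_le:
  fixes lam s :: real
  assumes s: "0 < s" "s \<le> lam" and pow: "lam ^ k \<le> 2 * s ^ k"
  shows "(\<Sum>j<k. lam ^ j / s ^ Suc j) \<le> 2 * real k / lam"
proof -
  have lam: "0 < lam"
    using s by linarith
  have ratio: "1 \<le> lam / s" "(lam / s) ^ k \<le> 2"
    using s pow by (simp_all add: power_divide pos_divide_le_eq)
  have "lam ^ j / s ^ Suc j \<le> 2 / lam" if "j < k" for j
  proof -
    have "lam ^ j / s ^ Suc j = (lam / s) ^ Suc j / lam"
      using lam by (simp add: power_divide)
    also have "\<dots> \<le> (lam / s) ^ k / lam"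
      using that ratio(1) lam by (intro divide_right_mono power_increasing) auto
    also have "\<dots> \<le> 2 / lam"
      using ratio(2) lam by (intro divide_right_mono) auto
    finally show ?thesis .
  qed
  then have "(\<Sum>j<k. lam ^ j / s ^ Suc j) \<le> (\<Sum>j<k. 2 / lam)"
    by (intro sum_mono) auto
  then show ?thesis
    by (simp add: mult.commute)
qed


lemma matvec_divide: "matvec S A (\<lambda>i. x i / c) i = matvec S A x i / c"
  unfolding matvec_def by (simp add: sum_divide_distrib)

lemma left_eigenvector_matvec_pow:
  assumes "\<And>u. u \<in> S \<Longrightarrow> (\<Sum>v\<in>S. y v * M v u) = lam * y u"
  shows "(\<Sum>v\<in>S. y v * (matvec S M ^^ j) e v) = lam ^ j * (\<Sum>v\<in>S. y v * e v)"
proof (induction j)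
  case (Suc j)
  have "(\<Sum>v\<in>S. y v * (matvec S M ^^ Suc j) e v)
      = (\<Sum>v\<in>S. \<Sum>u\<in>S. y v * M v u * (matvec S M ^^ j) e u)"
    by (simp add: matvec_def sum_distrib_left mult.assoc)
  also have "\<dots> = (\<Sum>u\<in>S. \<Sum>v\<in>S. y v * M v u * (matvec S M ^^ j) e u)"
    by (rule sum.swap)
  also have "\<dots> = (\<Sum>u\<in>S. (\<Sum>v\<in>S. y v * M v u) * (matvec S M ^^ j) e u)"
    by (simp add: sum_distrib_right)
  also have "\<dots> = lam * (\<Sum>u\<in>S. y u * (matvec S M ^^ j) e u)"
    using assms by (simp add: sum_distrib_left mult.assoc)
  finally show ?case
    using Suc by simp
qed simp

lemma matvec_pow_unit_expansion:
  assumes fin: "finite S" and v: "v \<in> S"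
  shows "(matvec S M ^^ j) e v = (\<Sum>u\<in>S. e u * (matvec S M ^^ j) (\<lambda>w. of_bool (w = u)) v)"
  using v
proof (induction j arbitrary: v)
  case 0
  have "(\<Sum>u\<in>S. e u * of_bool (v = u)) = (\<Sum>u\<in>S. if v = u then e u else 0)"
    by (rule sum.cong) auto
  also have "\<dots> = e v"
    using fin 0 by simp
  finally show ?case
    by simp
next
  case (Suc j)
  have "(matvec S M ^^ Suc j) e v = (\<Sum>w\<in>S. M v w * (matvec S M ^^ j) e w)"
    by (simp add: matvec_def)
  also have "\<dots> = (\<Sum>w\<in>S. \<Sum>u\<in>S. M v w * (e u * (matvec S M ^^ j) (\<lambda>w. of_bool (w = u)) w))"
    using Suc.IH by (simp add: sum_distrib_left)
  also have "\<dots> = (\<Sum>u\<in>S. \<Sum>w\<in>S. M v w * (e u * (matvec S M ^^ j) (\<lambda>w. of_bool (w = u)) w))"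
    by (rule sum.swap)
  also have "\<dots> = (\<Sum>u\<in>S. e u * (matvec S M ^^ Suc j) (\<lambda>w. of_bool (w = u)) v)"
    by (simp add: matvec_def sum_distrib_left mult.left_commute)
  finally show ?case .
qed

text \<open>Removing entries \<open>R = M - A\<close> from \<open>M\<close>, with \<open>M p = \<lambda> p\<close>: the vector
  \<open>p - q\<close>, where \<open>q\<close> is the truncated Neumann series of \<open>(s - M)\<^sup>-\<^sup>1 R p\<close>, is stretched
  by \<open>A\<close> almost by the factor \<open>s\<close>; the defect telescopes to the last term of the series.\<close>

lemma matvec_truncated_resolvent:
  fixes M A :: "'i \<Rightarrow> 'i \<Rightarrow> real"
  assumes fin: "finite S"
    and AM: "\<And>i j. i \<in> S \<Longrightarrow> j \<in> S \<Longrightarrow> 0 \<le> A i j \<and> A i j \<le> M i j"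
    and p0: "\<And>i. i \<in> S \<Longrightarrow> 0 \<le> p i"
    and Mp: "\<And>i. i \<in> S \<Longrightarrow> matvec S M p i = lam * p i"
    and s: "0 < s" and v: "v \<in> S"
    and e_def: "e = matvec S (\<lambda>i j. M i j - A i j) p"
    and q_def: "q = (\<lambda>i. \<Sum>j<n. (matvec S M ^^ j) e i / s ^ Suc j)"
  shows "s * (p v - q v) + (lam - s) * p v - (matvec S M ^^ n) e v / s ^ n
      \<le> matvec S A (\<lambda>i. p i - q i) v"
proof -
  define f where "f j = (matvec S M ^^ j) e" for j
  have e0: "0 \<le> e i" if "i \<in> S" for i
    unfolding e_def using AM that p0 by (intro matvec_nonneg) auto
  have M0: "0 \<le> M i j" if "i \<in> S" "j \<in> S" for i j
    using AM[OF that] by linarith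
  have q0: "0 \<le> q i" if "i \<in> S" for i
    unfolding q_def using matvec_pow_nonneg[of S M e, OF M0 e0 that] s
    by (auto intro!: sum_nonneg divide_nonneg_pos)
  have split: "matvec S A (\<lambda>i. p i - q i) v
      = matvec S M p v - matvec S M q v - e v + matvec S (\<lambda>i j. M i j - A i j) q v"
    unfolding e_def matvec_def
    by (simp add: sum_subtractf[symmetric] sum.distrib[symmetric] algebra_simps)
  have "matvec S M q v = (\<Sum>j<n. f (Suc j) v / s ^ Suc j)"
    unfolding q_def matvec_sum by (simp add: matvec_divide f_def)
  also have "\<dots> = s * q v - f 0 v + f n v / s ^ n"
  proof -
    have "(\<Sum>j<Suc n. f j v / s ^ j) = f 0 v + (\<Sum>j<n. f (Suc j) v / s ^ Suc j)"
      by (subst sum.lessThan_Suc_shift) simp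
    moreover have "(\<Sum>j<Suc n. f j v / s ^ j) = s * q v + f n v / s ^ n"
      using s by (simp add: q_def f_def sum_distrib_left)
    ultimately show ?thesis
      by linarith
  qed
  finally have Mq: "matvec S M q v = s * q v - e v + (matvec S M ^^ n) e v / s ^ n"
    by (simp add: f_def)
  have "0 \<le> matvec S (\<lambda>i j. M i j - A i j) q v"
    using AM v q0 by (intro matvec_nonneg) auto
  then show ?thesis
    unfolding split Mq Mp[OF v] by (simp add: algebra_simps)
qed

text \<open>The test vector is the positive part of \<open>p - q\<close>; it is nonzero because, paired with the
  left eigenvector \<open>y\<close>, \<open>q\<close> has less mass than \<open>p\<close>.\<close>

lemma spectral_radius_on_ge_perturbation:
  fixes M A :: "'i \<Rightarrow> 'i \<Rightarrow> real"
  assumes fin: "finite S"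
    and AM: "\<And>i j. i \<in> S \<Longrightarrow> j \<in> S \<Longrightarrow> 0 \<le> A i j \<and> A i j \<le> M i j"
    and p0: "\<And>i. i \<in> S \<Longrightarrow> 0 \<le> p i"
    and Mp: "\<And>i. i \<in> S \<Longrightarrow> matvec S M p i = lam * p i"
    and y0: "\<And>i. i \<in> S \<Longrightarrow> 0 < y i"
    and yM: "\<And>j. j \<in> S \<Longrightarrow> (\<Sum>i\<in>S. y i * M i j) = lam * y j"
    and s: "0 < s"
    and e_def: "e = matvec S (\<lambda>i j. M i j - A i j) p"
    and remainder: "\<And>i. i \<in> S \<Longrightarrow> (matvec S M ^^ n) e i \<le> s ^ n * (lam - s) * p i"
    and mass: "(\<Sum>j<n. lam ^ j / s ^ Suc j) * (\<Sum>i\<in>S. y i * e i) < (\<Sum>i\<in>S. y i * p i)"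
  shows "s \<le> spectral_radius_on S A"
proof -
  define q where "q = (\<lambda>i. \<Sum>j<n. (matvec S M ^^ j) e i / s ^ Suc j)"
  define x where "x i = max (p i - q i) 0" for i
  have A0: "0 \<le> A i j" if "i \<in> S" "j \<in> S" for i j
    using AM[OF that] by blast
  have x0: "0 \<le> x i" for i
    by (simp add: x_def)
  have stretch: "s * x i \<le> matvec S A x i" if i: "i \<in> S" for i
  proof -
    have "(matvec S M ^^ n) e i / s ^ n \<le> (lam - s) * p i"
      using remainder[OF i] s by (simp add: pos_divide_le_eq mult.commute mult.left_commute)
    then have "s * (p i - q i) \<le> matvec S A (\<lambda>i. p i - q i) i"
      using matvec_truncated_resolvent[OF fin AM p0 Mp s i e_def q_def] by linarith
    also have "\<dots> \<le> matvec S A x i"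
      by (rule matvec_mono) (use A0 i in \<open>auto simp: x_def\<close>)
    finally have "s * (p i - q i) \<le> matvec S A x i" .
    moreover have "0 \<le> matvec S A x i"
      by (rule matvec_nonneg) (use A0 i x0 in auto)
    ultimately show ?thesis
      by (cases "p i - q i \<le> 0") (simp_all add: x_def max_def)
  qed
  have "(\<Sum>i\<in>S. y i * q i) = (\<Sum>i\<in>S. \<Sum>j<n. y i * (matvec S M ^^ j) e i / s ^ Suc j)"
    by (simp add: q_def sum_distrib_left)
  also have "\<dots> = (\<Sum>j<n. (\<Sum>i\<in>S. y i * (matvec S M ^^ j) e i) / s ^ Suc j)"
    by (subst sum.swap) (simp add: sum_divide_distrib)
  also have "\<dots> = (\<Sum>j<n. lam ^ j / s ^ Suc j) * (\<Sum>i\<in>S. y i * e i)"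
    by (simp add: left_eigenvector_matvec_pow[OF yM] sum_distrib_right)
  finally have "0 < (\<Sum>i\<in>S. y i * (p i - q i))"
    using mass by (simp add: right_diff_distrib sum_subtractf)
  have "\<exists>i\<in>S. 0 < p i - q i"
  proof (rule ccontr)
    assume "\<not> ?thesis"
    then have "(\<Sum>i\<in>S. y i * (p i - q i)) \<le> 0"
      using y0 by (intro sum_nonpos) (simp add: mult_nonneg_nonpos less_imp_le not_less)
    with \<open>0 < (\<Sum>i\<in>S. y i * (p i - q i))\<close> show False
      by simp
  qed
  then obtain i0 where i0: "i0 \<in> S" "0 < x i0"
    by (auto simp: x_def)
  show ?thesis
    by (rule spectral_radius_on_geI[of S A x i0 s, OF fin A0 x0 i0 s stretch])
qed

lemma spectral_radius_on_ge_perturbation_bounds: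
  fixes M A :: "'i \<Rightarrow> 'i \<Rightarrow> real"
  assumes fin: "finite S"
    and AM: "\<And>i j. i \<in> S \<Longrightarrow> j \<in> S \<Longrightarrow> 0 \<le> A i j \<and> A i j \<le> M i j"
    and pmin: "0 \<le> pmin" and p: "\<And>i. i \<in> S \<Longrightarrow> pmin \<le> p i"
    and Mp: "\<And>i. i \<in> S \<Longrightarrow> matvec S M p i = lam * p i"
    and ymax: "0 \<le> ymax" and y: "\<And>i. i \<in> S \<Longrightarrow> 0 < y i \<and> y i \<le> ymax"
    and yM: "\<And>j. j \<in> S \<Longrightarrow> (\<Sum>i\<in>S. y i * M i j) = lam * y j"
    and s: "0 < s" "s \<le> lam" and pow: "lam ^ n \<le> 2 * s ^ n"
    and e_def: "e = matvec S (\<lambda>i j. M i j - A i j) p"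
    and paths: "\<And>i. i \<in> S \<Longrightarrow> (matvec S M ^^ n) e i \<le> (\<Sum>j\<in>S. e j)"
    and E: "(\<Sum>j\<in>S. e j) \<le> E"
    and remainder: "E \<le> s ^ n * (lam - s) * pmin"
    and mass: "2 * real n * E * ymax < lam * pmin * (\<Sum>i\<in>S. y i)"
  shows "s \<le> spectral_radius_on S A"
proof -
  have lam: "0 < lam"
    using s by linarith
  have p0: "0 \<le> p i" if "i \<in> S" for i
    using p[OF that] pmin by linarith
  have y0: "0 \<le> y i" if "i \<in> S" for i
    using y[OF that] by simp
  have e0: "0 \<le> e i" if "i \<in> S" for i
    unfolding e_def using AM that p0 by (intro matvec_nonneg) auto
  show ?thesis
  proof (rule spectral_radius_on_ge_perturbation[where M = M and p = p and y = y and lam = lam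
        and e = e and n = n])
    show "finite S" "\<And>i j. i \<in> S \<Longrightarrow> j \<in> S \<Longrightarrow> 0 \<le> A i j \<and> A i j \<le> M i j"
      "\<And>i. i \<in> S \<Longrightarrow> 0 \<le> p i" "\<And>i. i \<in> S \<Longrightarrow> matvec S M p i = lam * p i"
      "\<And>j. j \<in> S \<Longrightarrow> (\<Sum>i\<in>S. y i * M i j) = lam * y j" "0 < s"
      "e = matvec S (\<lambda>i j. M i j - A i j) p"
      by (fact fin AM p0 Mp yM s(1) e_def)+
    show "0 < y i" if "i \<in> S" for i
      using y[OF that] by blast
    show "(matvec S M ^^ n) e i \<le> s ^ n * (lam - s) * p i" if "i \<in> S" for i
    proof -
      have "(matvec S M ^^ n) e i \<le> s ^ n * (lam - s) * pmin"
        using paths[OF that] E remainder by linarith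
      also have "\<dots> \<le> s ^ n * (lam - s) * p i"
        using s p[OF that] by (intro mult_left_mono) auto
      finally show ?thesis .
    qed
    have "(\<Sum>i\<in>S. y i * e i) \<le> (\<Sum>i\<in>S. ymax * e i)"
      using y e0 by (intro sum_mono mult_right_mono) auto
    also have "\<dots> = ymax * (\<Sum>i\<in>S. e i)"
      by (rule sum_distrib_left[symmetric])
    also have "\<dots> \<le> ymax * E"
      using E ymax by (rule mult_left_mono)
    finally have ye: "(\<Sum>i\<in>S. y i * e i) \<le> ymax * E" .
    have "(\<Sum>j<n. lam ^ j / s ^ Suc j) * (\<Sum>i\<in>S. y i * e i) \<le> 2 * real n / lam * (ymax * E)"
      using sum_power_ratio_le[OF s pow] ye lam y0 e0
      by (intro mult_mono) (auto intro!: sum_nonneg mult_nonneg_nonneg)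
    also have "\<dots> = 2 * real n * E * ymax / lam"
      by (simp add: ac_simps)
    also have "\<dots> < pmin * (\<Sum>i\<in>S. y i)"
      using mass lam by (simp add: pos_divide_less_eq ac_simps)
    also have "\<dots> = (\<Sum>i\<in>S. y i * pmin)"
      by (simp add: sum_distrib_left mult.commute)
    also have "\<dots> \<le> (\<Sum>i\<in>S. y i * p i)"
      using y0 p by (intro sum_mono mult_left_mono) auto
    finally show "(\<Sum>j<n. lam ^ j / s ^ Suc j) * (\<Sum>i\<in>S. y i * e i) < (\<Sum>i\<in>S. y i * p i)" .
  qed
qed

section \<open>Admissible words and the matrices \<open>T\<^sub>k\<close>\<close>

lemma admissible_iff_successively:
  "admissible r T k w \<longleftrightarrow> length w = k \<and> set w \<subseteq> {..<r} \<and> successively (\<lambda>a b. T b a) w"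
  unfolding admissible_def successively_conv_nth by auto

lemma admissible_Cons:
  "admissible r T (Suc k) (a # v) \<longleftrightarrow> a < r \<and> admissible r T k v \<and> (v = [] \<or> T (hd v) a)"
  by (auto simp: admissible_iff_successively successively_Cons)

lemma admissible_snoc:
  "admissible r T (Suc k) (v @ [x]) \<longleftrightarrow> admissible r T k v \<and> x < r \<and> (v = [] \<or> T x (last v))"
  by (auto simp: admissible_iff_successively successively_append_iff)

lemma admissible_length: "admissible r T k w \<Longrightarrow> length w = k"
  by (simp add: admissible_def)

lemma admissible_set: "admissible r T k w \<Longrightarrow> a \<in> set w \<Longrightarrow> a < r"
  by (auto simp: admissible_def)

lemma adm_words_hd_last:
  assumes "v \<in> adm_words r T k" "1 \<le> k"
  shows "hd v < r" "last v < r"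
proof -
  have "admissible r T k v" "v \<noteq> []"
    using assms by (auto simp: adm_words_def dest: admissible_length)
  then show "hd v < r" "last v < r"
    by (auto intro: admissible_set)
qed

lemma finite_adm_words: "finite (adm_words r T k)"
proof (rule finite_subset)
  show "adm_words r T k \<subseteq> {w. set w \<subseteq> {..<r} \<and> length w = k}"
    by (auto simp: adm_words_def admissible_iff_successively)
qed (simp add: finite_lists_length_eq)

lemma card_adm_words_le: "card (adm_words r T k) \<le> r ^ k"
proof -
  have "card (adm_words r T k) \<le> card {w. set w \<subseteq> {..<r} \<and> length w = k}"
    by (intro card_mono) (auto simp: finite_lists_length_eq adm_words_def admissible_iff_successively)
  then show ?thesis
    by (simp add: card_lists_length_eq)
qed

lemma Tk_mat_predecessors:
  assumes k: "k = Suc (Suc m)" and v: "admissible r T k v"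
  shows "{u \<in> adm_words r T k. tl u = butlast v} = (\<lambda>a. a # butlast v) ` ({..<r} \<inter> {a. T (hd v) a})"
proof -
  have "length v = Suc (Suc m)"
    using v k by (simp add: admissible_length)
  then have "v \<noteq> []" and bv: "butlast v \<noteq> []" "hd (butlast v) = hd v"
    by (cases v; auto)+
  have "admissible r T (Suc m) (butlast v)"
    using v admissible_snoc[of r T "Suc m" "butlast v" "last v"] \<open>v \<noteq> []\<close> k by simp
  then have adm_iff: "admissible r T k (a # butlast v) \<longleftrightarrow> a < r \<and> T (hd v) a" for a
    using k bv by (simp add: admissible_Cons)
  show ?thesis
  proof (intro equalityI subsetI)
    fix u assume "u \<in> {u \<in> adm_words r T k. tl u = butlast v}"
    then have u: "admissible r T k u" "tl u = butlast v"
      by (auto simp: adm_words_def)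
    then have "u = hd u # butlast v"
      using k by (metis admissible_length list.collapse list.size(3) nat.distinct(1))
    then show "u \<in> (\<lambda>a. a # butlast v) ` ({..<r} \<inter> {a. T (hd v) a})"
      using u(1) adm_iff[of "hd u"] by auto
  qed (auto simp: adm_words_def adm_iff)
qed

lemma Tk_mat_successors:
  assumes k: "k = Suc (Suc m)" and u: "admissible r T k u"
  shows "{v \<in> adm_words r T k. tl u = butlast v} = (\<lambda>x. tl u @ [x]) ` ({..<r} \<inter> {x. T x (last u)})"
proof -
  have "length u = Suc (Suc m)"
    using u k by (simp add: admissible_length)
  then have u_eq: "u = hd u # tl u" and tu: "tl u \<noteq> []" "last (tl u) = last u"
    by (cases u; auto)+
  have "admissible r T (Suc m) (tl u)"
    using u admissible_Cons[of r T "Suc m" "hd u" "tl u"] u_eq k by simp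
  then have adm_iff: "admissible r T k (tl u @ [x]) \<longleftrightarrow> x < r \<and> T x (last u)" for x
    using k tu by (simp add: admissible_snoc)
  show ?thesis
  proof (intro equalityI subsetI)
    fix v assume "v \<in> {v \<in> adm_words r T k. tl u = butlast v}"
    then have v: "admissible r T k v" "tl u = butlast v"
      by (auto simp: adm_words_def)
    then have "v = tl u @ [last v]"
      using k by (metis admissible_length append_butlast_last_id list.size(3) nat.distinct(1))
    then show "v \<in> (\<lambda>x. tl u @ [x]) ` ({..<r} \<inter> {x. T x (last u)})"
      using v(1) adm_iff[of "last v"] by auto
  qed (auto simp: adm_words_def adm_iff)
qed

lemma Tk_mat_right_eigenvector:
  assumes k: "k = Suc (Suc m)" and v: "v \<in> adm_words r T k"
    and z: "\<And>a. a < r \<Longrightarrow> (\<Sum>b<r. of_bool (T a b) * z b) = lam * z a"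
  shows "matvec (adm_words r T k) (Tk_mat r T k {}) (\<lambda>u. z (hd u)) v = lam * z (hd v)"
proof -
  let ?S = "adm_words r T k"
  have va: "admissible r T k v"
    using v by (simp add: adm_words_def)
  have "hd v < r"
    using adm_words_hd_last(1)[OF v] k by simp
  have "matvec ?S (Tk_mat r T k {}) (\<lambda>u. z (hd u)) v
      = (\<Sum>u\<in>{u \<in> ?S. tl u = butlast v}. z (hd u))"
    unfolding matvec_def sum.inter_filter[OF finite_adm_words]
    using va by (intro sum.cong) (auto simp: Tk_mat_def adm_words_def)
  also have "\<dots> = (\<Sum>b<r. of_bool (T (hd v) b) * z b)"
    unfolding Tk_mat_predecessors[OF k va] by (subst sum.reindex) (auto simp: inj_on_def)
  also have "\<dots> = lam * z (hd v)"
    using z \<open>hd v < r\<close> by simp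
  finally show ?thesis .
qed

lemma Tk_mat_left_eigenvector:
  assumes k: "k = Suc (Suc m)" and u: "u \<in> adm_words r T k"
    and z: "\<And>b. b < r \<Longrightarrow> (\<Sum>a<r. z a * of_bool (T a b)) = lam * z b"
  shows "(\<Sum>v\<in>adm_words r T k. z (last v) * Tk_mat r T k {} v u) = lam * z (last u)"
proof -
  let ?S = "adm_words r T k"
  have ua: "admissible r T k u"
    using u by (simp add: adm_words_def)
  have "last u < r"
    using adm_words_hd_last(2)[OF u] k by simp
  have "(\<Sum>v\<in>?S. z (last v) * Tk_mat r T k {} v u) = (\<Sum>v\<in>{v \<in> ?S. tl u = butlast v}. z (last v))"
    unfolding sum.inter_filter[OF finite_adm_words]
    using ua by (intro sum.cong) (auto simp: Tk_mat_def adm_words_def)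
  also have "\<dots> = (\<Sum>a<r. z a * of_bool (T a (last u)))"
    unfolding Tk_mat_successors[OF k ua] by (subst sum.reindex) (auto simp: inj_on_def)
  also have "\<dots> = lam * z (last u)"
    using z \<open>last u < r\<close> by simp
  finally show ?thesis .
qed

lemma adm_words_Suc:
  assumes k: "1 \<le> k"
  shows "adm_words r T (Suc k)
    = (\<lambda>(v, x). v @ [x]) ` (SIGMA v:adm_words r T k. {..<r} \<inter> {x. T x (last v)})"
proof (intro equalityI subsetI)
  fix w assume "w \<in> adm_words r T (Suc k)"
  then have w: "admissible r T (Suc k) w"
    by (simp add: adm_words_def)
  then have "w \<noteq> []"
    by (auto dest: admissible_length)
  with w have "admissible r T (Suc k) (butlast w @ [last w])"
    by simp
  then have parts: "admissible r T k (butlast w)" "last w < r"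
    "butlast w = [] \<or> T (last w) (last (butlast w))"
    by (simp_all add: admissible_snoc)
  have "butlast w \<noteq> []"
    using admissible_length[OF parts(1)] k by (metis list.size(3) not_one_le_zero)
  then show "w \<in> (\<lambda>(v, x). v @ [x]) ` (SIGMA v:adm_words r T k. {..<r} \<inter> {x. T x (last v)})"
    using parts \<open>w \<noteq> []\<close>
    by (auto simp: adm_words_def intro!: image_eqI[of _ _ "(butlast w, last w)"])
qed (use k in \<open>auto simp: adm_words_def admissible_snoc admissible_length\<close>)

lemma sum_adm_words_last:
  fixes z :: "nat \<Rightarrow> real"
  assumes k: "1 \<le> k" and z: "\<And>b. b < r \<Longrightarrow> (\<Sum>a<r. z a * of_bool (T a b)) = lam * z b"
  shows "(\<Sum>v\<in>adm_words r T k. z (last v)) = lam ^ (k - 1) * (\<Sum>a<r. z a)"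
  using k
proof (induction k rule: nat_induct_at_least)
  case base
  have "adm_words r T 1 = (\<lambda>a. [a]) ` {..<r}"
    by (auto simp: adm_words_def admissible_iff_successively length_Suc_conv)
  then show ?case
    by (simp add: sum.reindex inj_on_def)
next
  case (Suc k)
  let ?E = "\<lambda>v. {..<r} \<inter> {x. T x (last v)}"
  have inj: "inj_on (\<lambda>(v, x). v @ [x]) (SIGMA v:adm_words r T k. ?E v)"
    by (auto simp: inj_on_def)
  have E: "(\<Sum>x\<in>?E v. z x) = lam * z (last v)" if "v \<in> adm_words r T k" for v
  proof -
    have "(\<Sum>x\<in>?E v. z x) = (\<Sum>a<r. if T a (last v) then z a else 0)"
      by (simp add: sum.inter_restrict)
    also have "\<dots> = (\<Sum>a<r. z a * of_bool (T a (last v)))"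
      by (rule sum.cong) auto
    also have "\<dots> = lam * z (last v)"
      by (rule z[OF adm_words_hd_last(2)[OF that Suc.hyps]])
    finally show ?thesis .
  qed
  have "(\<Sum>w\<in>adm_words r T (Suc k). z (last w)) = (\<Sum>v\<in>adm_words r T k. \<Sum>x\<in>?E v. z x)"
    unfolding adm_words_Suc[OF Suc.hyps] sum.reindex[OF inj]
    by (subst sum.Sigma) (auto simp: finite_adm_words case_prod_unfold)
  also have "\<dots> = (\<Sum>v\<in>adm_words r T k. lam * z (last v))"
    by (rule sum.cong) (simp_all add: E)
  also have "\<dots> = lam * (\<Sum>v\<in>adm_words r T k. z (last v))"
    by (rule sum_distrib_left[symmetric])
  also have "\<dots> = lam ^ (Suc k - 1) * (\<Sum>a<r. z a)"
    using Suc.IH Suc.hyps by (cases k) (simp_all add: mult.assoc)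
  finally show ?case .
qed

text \<open>For \<open>j \<le> k\<close> a path of length \<open>j\<close> between two \<open>k\<close>-words is determined by its
  end points (the letters appended are the last \<open>j\<close> letters of the target), so the
  entries of \<open>T\<^sub>k\<^sup>j\<close> are \<open>0\<close> or \<open>1\<close>.\<close>

lemma Tk_mat_pow_indicator:
  assumes k: "1 \<le> k" and v: "v \<in> adm_words r T k" and j: "j \<le> k"
  shows "(matvec (adm_words r T k) (Tk_mat r T k {}) ^^ j) (\<lambda>u. of_bool (u = v)) w \<in> {0, 1}
       \<and> ((matvec (adm_words r T k) (Tk_mat r T k {}) ^^ j) (\<lambda>u. of_bool (u = v)) w \<noteq> 0
            \<longrightarrow> take (k - j) w = drop j v)"
  using j
proof (induction j arbitrary: w)
  case 0
  then show ?case
    using v by (auto simp: adm_words_def admissible_length)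
next
  case (Suc j)
  let ?S = "adm_words r T k"
  define F where "F = (matvec ?S (Tk_mat r T k {}) ^^ j) (\<lambda>u. of_bool (u = v))"
  define g where "g u = Tk_mat r T k {} w u * F u" for u
  have IH: "F u \<in> {0, 1}" "F u \<noteq> 0 \<Longrightarrow> take (k - j) u = drop j v" for u
    using Suc by (auto simp: F_def)
  have step: "(matvec ?S (Tk_mat r T k {}) ^^ Suc j) (\<lambda>u. of_bool (u = v)) w = (\<Sum>u\<in>?S. g u)"
    by (simp add: matvec_def g_def F_def)
  have g_nz: "admissible r T k w \<and> admissible r T k u \<and> tl u = butlast w
      \<and> take (k - j) u = drop j v \<and> g u = 1" if "g u \<noteq> 0" for u
    using that IH[of u] by (auto simp: g_def Tk_mat_def split: if_splits)
  have unique: "u1 = u2" if "g u1 \<noteq> 0" "g u2 \<noteq> 0" for u1 u2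
  proof -
    have "u1 \<noteq> []" "u2 \<noteq> []"
      using g_nz[OF that(1)] g_nz[OF that(2)] k by (auto dest!: admissible_length)
    moreover have "hd u1 = hd u2"
      using g_nz[OF that(1)] g_nz[OF that(2)] Suc.prems
      by (metis hd_take zero_less_diff Suc_le_lessD)
    ultimately show ?thesis
      using g_nz[OF that(1)] g_nz[OF that(2)] by (metis list.collapse)
  qed
  show ?case
  proof (cases "\<exists>u\<in>?S. g u \<noteq> 0")
    case False
    then show ?thesis
      unfolding step by (simp add: sum.neutral)
  next
    case True
    then obtain u0 where u0: "u0 \<in> ?S" "g u0 \<noteq> 0"
      by blast
    have "sum g {u0} = (\<Sum>u\<in>?S. g u)"
      by (rule sum.mono_neutral_left) (use u0 unique in \<open>auto simp: finite_adm_words\<close>)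
    then have sum_eq: "(\<Sum>u\<in>?S. g u) = 1"
      using g_nz[OF u0(2)] by simp
    obtain w_adm: "admissible r T k w" and u0w: "tl u0 = butlast w"
      and u0v: "take (k - j) u0 = drop j v"
      using g_nz[OF u0(2)] by blast
    have "take (k - Suc j) w = take (k - Suc j) (butlast w)"
      using admissible_length[OF w_adm] k by (simp add: take_butlast)
    also have "\<dots> = tl (take (k - j) u0)"
      by (simp add: u0w tl_take)
    also have "\<dots> = drop (Suc j) v"
      by (simp add: u0v tl_drop drop_Suc)
    finally show ?thesis
      using step sum_eq by simp
  qed
qed

lemma sum_removed_entries_le:
  assumes k: "1 \<le> k" and C: "finite C"
  shows "(\<Sum>v\<in>adm_words r T k. \<Sum>u\<in>adm_words r T k. Tk_mat r T k {} v u - Tk_mat r T k C v u)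
      \<le> card C"
proof -
  let ?S = "adm_words r T k"
  define P where "P = {(v, u) \<in> ?S \<times> ?S. tl u = butlast v \<and> u @ [last v] \<in> C}"
  have "(\<Sum>v\<in>?S. \<Sum>u\<in>?S. Tk_mat r T k {} v u - Tk_mat r T k C v u)
      = (\<Sum>p\<in>?S \<times> ?S. of_bool (p \<in> P))"
    unfolding sum.cartesian_product
    by (rule sum.cong) (auto simp: P_def Tk_mat_def adm_words_def split: if_splits)
  also have "\<dots> = card P"
  proof -
    have "P \<subseteq> ?S \<times> ?S"
      by (auto simp: P_def)
    then show ?thesis
      using finite_adm_words[of r T k] by (simp add: Int_absorb1)
  qed
  also have "card P \<le> card C"
  proof (rule card_inj_on_le[OF _ _ C])
    show "inj_on (\<lambda>(v, u). u @ [last v]) P"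
    proof (rule inj_onI)
      fix p1 p2 assume "p1 \<in> P" "p2 \<in> P"
        and "(\<lambda>(v, u). u @ [last v]) p1 = (\<lambda>(v, u). u @ [last v]) p2"
      moreover obtain v1 u1 v2 u2 where "p1 = (v1, u1)" "p2 = (v2, u2)"
        by (cases p1, cases p2)
      ultimately have p: "(v1, u1) \<in> P" "(v2, u2) \<in> P" and eq: "u1 @ [last v1] = u2 @ [last v2]"
        by simp_all
      have len: "length u1 = k" "length u2 = k" "length v1 = k" "length v2 = k"
        using p by (auto simp: P_def adm_words_def admissible_length)
      then have "u1 = u2" "last v1 = last v2"
        using eq by auto
      moreover have "v1 = butlast v1 @ [last v1]" "v2 = butlast v2 @ [last v2]"
        using len k by (metis append_butlast_last_id list.size(3) not_one_le_zero)+
      moreover have "butlast v1 = tl u1" "butlast v2 = tl u2"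
        using p by (auto simp: P_def)
      ultimately show "p1 = p2"
        using \<open>p1 = (v1, u1)\<close> \<open>p2 = (v2, u2)\<close> by metis
    qed
    show "(\<lambda>(v, u). u @ [last v]) ` P \<subseteq> C"
      by (auto simp: P_def)
  qed
  finally show ?thesis
    by simp
qed

lemma Tk_mat_pow_le_sum:
  assumes k: "1 \<le> k" and w: "w \<in> adm_words r T k"
    and e0: "\<And>u. u \<in> adm_words r T k \<Longrightarrow> 0 \<le> e u"
  shows "(matvec (adm_words r T k) (Tk_mat r T k {}) ^^ k) e w \<le> (\<Sum>u\<in>adm_words r T k. e u)"
proof -
  let ?S = "adm_words r T k"
  have "(matvec ?S (Tk_mat r T k {}) ^^ k) e w
      = (\<Sum>u\<in>?S. e u * (matvec ?S (Tk_mat r T k {}) ^^ k) (\<lambda>w. of_bool (w = u)) w)"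
    by (rule matvec_pow_unit_expansion[OF finite_adm_words w])
  also have "\<dots> \<le> (\<Sum>u\<in>?S. e u * 1)"
  proof (intro sum_mono mult_left_mono)
    fix u assume "u \<in> ?S"
    then show "(matvec ?S (Tk_mat r T k {}) ^^ k) (\<lambda>w. of_bool (w = u)) w \<le> 1" "0 \<le> e u"
      using Tk_mat_pow_indicator[OF k _ order_refl, of u r T w] e0 by auto
  qed
  finally show ?thesis
    by simp
qed

lemma sum_removed_matvec_le:
  fixes c :: real
  assumes k: "1 \<le> k" and C: "finite C" and c: "0 \<le> c"
    and p: "\<And>u. u \<in> adm_words r T k \<Longrightarrow> 0 \<le> p u \<and> p u \<le> c"
  shows "(\<Sum>v\<in>adm_words r T k.
      matvec (adm_words r T k) (\<lambda>v u. Tk_mat r T k {} v u - Tk_mat r T k C v u) p v) \<le> real (card C) * c"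
proof -
  let ?S = "adm_words r T k"
  let ?R = "\<lambda>v u. Tk_mat r T k {} v u - Tk_mat r T k C v u"
  have R0: "0 \<le> ?R v u" for v u
    by (simp add: Tk_mat_def)
  have "(\<Sum>v\<in>?S. matvec ?S ?R p v) \<le> (\<Sum>v\<in>?S. \<Sum>u\<in>?S. ?R v u * c)"
    unfolding matvec_def using p R0 by (intro sum_mono mult_left_mono) auto
  also have "\<dots> = (\<Sum>v\<in>?S. \<Sum>u\<in>?S. ?R v u) * c"
    by (simp add: sum_distrib_right)
  also have "\<dots> \<le> real (card C) * c"
    using sum_removed_entries_le[OF k C] c by (rule mult_right_mono)
  finally show ?thesis .
qed

section \<open>The spectral radius after removing two words\<close>

lemma PF_eigenvalue_eigenvectors:
  assumes r: "1 \<le> r" and irr: "irreducible01 r T"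
  obtains z z' :: "nat \<Rightarrow> real"
  where "\<And>a. a < r \<Longrightarrow> 0 < z a" and "\<And>a. a < r \<Longrightarrow> 0 < z' a"
    and "\<And>a. a < r \<Longrightarrow> (\<Sum>b<r. of_bool (T a b) * z b) = PF_eigenvalue r T * z a"
    and "\<And>b. b < r \<Longrightarrow> (\<Sum>a<r. z' a * of_bool (T a b)) = PF_eigenvalue r T * z' b"
proof -
  let ?S = "{0..<r}"
  let ?A = "\<lambda>x y. of_bool (T x y) :: real"
  let ?R = "{(a, b). a < r \<and> b < r \<and> T b a}"
  have fin: "finite ?S" and ne: "?S \<noteq> {}" and A0: "\<And>i j. 0 \<le> ?A i j"
    using r by auto
  have pf: "PF_eigenvalue r T = spectral_radius_on ?S ?A"
    unfolding PF_eigenvalue_def of_bool_def ..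
  have "irreducible_on ?S ?A"
  proof (rule irreducible_onI)
    fix i j assume "i \<in> ?S" "j \<in> ?S"
    then have "(i, j) \<in> ?R\<^sup>*"
      using irr by (simp add: irreducible01_def)
    also have "?R = {(i, j). i \<in> ?S \<and> j \<in> ?S \<and> 0 < ?A j i}"
      by auto
    finally show "(i, j) \<in> {(i, j). i \<in> ?S \<and> j \<in> ?S \<and> 0 < ?A j i}\<^sup>*" .
  qed
  then obtain z where z: "\<And>i. i \<in> ?S \<Longrightarrow> 0 < z i"
    "\<And>i. i \<in> ?S \<Longrightarrow> matvec ?S ?A z i = PF_eigenvalue r T * z i"
    using perron_frobenius_eigenvector[OF fin ne] A0 pf by metis
  have "irreducible_on ?S (\<lambda>i j. ?A j i)"
  proof (rule irreducible_onI)
    fix i j assume "i \<in> ?S" "j \<in> ?S"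
    then have "(i, j) \<in> (?R\<inverse>)\<^sup>*"
      using irr by (simp add: irreducible01_def rtrancl_converse)
    also have "?R\<inverse> = {(i, j). i \<in> ?S \<and> j \<in> ?S \<and> 0 < ?A i j}"
      by auto
    finally show "(i, j) \<in> {(i, j). i \<in> ?S \<and> j \<in> ?S \<and> 0 < ?A i j}\<^sup>*" .
  qed
  then obtain z' where z': "\<And>i. i \<in> ?S \<Longrightarrow> 0 < z' i"
    "\<And>i. i \<in> ?S \<Longrightarrow> matvec ?S (\<lambda>i j. ?A j i) z' i = PF_eigenvalue r T * z' i"
    using perron_frobenius_eigenvector[OF fin ne] A0 pf spectral_radius_on_transpose[OF fin, of ?A]
    by metis
  show ?thesis
  proof (rule that[of z z'])
    fix a assume "a < r"
    then show "0 < z a" "0 < z' a"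
      using z(1) z'(1) by auto
    show "(\<Sum>b<r. of_bool (T a b) * z b) = PF_eigenvalue r T * z a"
      using z(2)[of a] \<open>a < r\<close> by (simp add: matvec_def atLeast0LessThan)
    show "(\<Sum>b<r. z' b * of_bool (T b a)) = PF_eigenvalue r T * z' a"
      using z'(2)[of a] \<open>a < r\<close> by (simp add: matvec_def atLeast0LessThan mult.commute)
  qed
qed

lemma adm_words_nonempty:
  fixes z' :: "nat \<Rightarrow> real"
  assumes k: "1 \<le> k" and r: "1 \<le> r" and lam: "0 < lam"
    and z'0: "\<And>a. a < r \<Longrightarrow> 0 < z' a"
    and z': "\<And>b. b < r \<Longrightarrow> (\<Sum>a<r. z' a * of_bool (T a b)) = lam * z' b"
  shows "adm_words r T k \<noteq> {}"
proof
  assume "adm_words r T k = {}"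
  then have "lam ^ (k - 1) * (\<Sum>a<r. z' a) = 0"
    using sum_adm_words_last[OF k z'] by simp
  moreover have "0 < (\<Sum>a<r. z' a)"
    using r z'0 by (intro sum_pos) (auto simp: lessThan_empty_iff)
  ultimately show False
    using lam by simp
qed

lemma removed_words_radius_le:
  fixes z' :: "nat \<Rightarrow> real"
  assumes k: "k = Suc (Suc m)" and r: "1 \<le> r" and lam: "0 < lam"
    and z'0: "\<And>a. a < r \<Longrightarrow> 0 < z' a"
    and z': "\<And>b. b < r \<Longrightarrow> (\<Sum>a<r. z' a * of_bool (T a b)) = lam * z' b"
  shows "spectral_radius_on (adm_words r T k) (Tk_mat r T k C) \<le> lam"
proof (rule spectral_radius_on_le_left_eigenvalue)
  show "adm_words r T k \<noteq> {}"
    using adm_words_nonempty[OF _ r lam z'0 z'] k by simp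
  show "0 < z' (last v)" if "v \<in> adm_words r T k" for v
    using z'0 adm_words_hd_last(2)[OF that] k by simp
  show "(\<Sum>v\<in>adm_words r T k. z' (last v) * Tk_mat r T k {} v u) = lam * z' (last u)"
    if "u \<in> adm_words r T k" for u
    by (rule Tk_mat_left_eigenvector[OF k that z'])
qed (auto simp: finite_adm_words Tk_mat_def)

text \<open>For \<open>k = 1\<close> every pair of letters is an edge of \<open>T\<^sub>1\<close> (\<open>tl u = butlast v = []\<close>), so
  \<open>T\<^sub>1\<close> is the all-ones matrix rather than \<open>T\<close>; this crude bound covers all \<open>k\<close>.\<close>

lemma removed_words_radius_crude:
  assumes r: "1 \<le> r" and irr: "irreducible01 r T" and lam: "0 < PF_eigenvalue r T"
    and k: "1 \<le> k"
  shows "\<bar>spectral_radius_on (adm_words r T k) (Tk_mat r T k C) - PF_eigenvalue r T\<bar>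
      \<le> real r ^ k + PF_eigenvalue r T"
proof -
  obtain z' :: "nat \<Rightarrow> real" where "\<And>a. a < r \<Longrightarrow> 0 < z' a"
    and "\<And>b. b < r \<Longrightarrow> (\<Sum>a<r. z' a * of_bool (T a b)) = PF_eigenvalue r T * z' b"
    using PF_eigenvalue_eigenvectors[OF r irr] by metis
  then have ne: "adm_words r T k \<noteq> {}"
    using adm_words_nonempty[OF k r lam] by blast
  have "spectral_radius_on (adm_words r T k) (Tk_mat r T k C) \<le> card (adm_words r T k)"
    by (rule spectral_radius_on_le_card[OF finite_adm_words ne]) (simp add: Tk_mat_def)
  also have "\<dots> \<le> real r ^ k"
    using card_adm_words_le[of r T k] by (metis of_nat_le_iff of_nat_power)
  finally show ?thesis
    using spectral_radius_on_nonneg[OF finite_adm_words ne, of "Tk_mat r T k C"] lam by linarith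
qed

lemma removed_words_radius_ge:
  fixes z z' :: "nat \<Rightarrow> real"
  assumes k: "k = Suc (Suc m)" and r: "1 \<le> r" and lam: "0 < lam"
    and z: "\<And>a. a < r \<Longrightarrow> zmin \<le> z a \<and> z a \<le> zmax" and zmin: "0 < zmin"
    and z': "\<And>a. a < r \<Longrightarrow> 0 < z' a \<and> z' a \<le> z'max"
    and zr: "\<And>a. a < r \<Longrightarrow> (\<Sum>b<r. of_bool (T a b) * z b) = lam * z a"
    and zl: "\<And>b. b < r \<Longrightarrow> (\<Sum>a<r. z' a * of_bool (T a b)) = lam * z' b"
    and eps: "eps = 4 * zmax / (zmin * lam ^ k)"
    and small: "2 * real k * eps \<le> lam"
    and large: "4 * real k * zmax * z'max < zmin * (\<Sum>a<r. z' a) * lam ^ k"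
  shows "lam - eps \<le> spectral_radius_on (adm_words r T k) (Tk_mat r T k {w1, w2})"
proof -
  let ?S = "adm_words r T k"
  let ?M = "Tk_mat r T k {}"
  let ?A = "Tk_mat r T k {w1, w2}"
  define s where "s = lam - eps"
  define p where "p v = z (hd v)" for v
  define y where "y v = z' (last v)" for v
  define e where "e = matvec ?S (\<lambda>i j. ?M i j - ?A i j) p"
  have k1: "1 \<le> k"
    using k by simp
  have p: "zmin \<le> p v \<and> p v \<le> zmax" if "v \<in> ?S" for v
    using z[OF adm_words_hd_last(1)[OF that k1]] by (simp add: p_def)
  have y: "0 < y v \<and> y v \<le> z'max" if "v \<in> ?S" for v
    using z'[OF adm_words_hd_last(2)[OF that k1]] by (simp add: y_def)
  have p0: "0 \<le> p v" if "v \<in> ?S" for v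
    using p[OF that] zmin by linarith
  have zmax: "0 \<le> zmax" and z'max: "0 \<le> z'max"
    using z[of 0] z'[of 0] zmin r by linarith+
  have e0: "0 \<le> e v" if "v \<in> ?S" for v
    unfolding e_def using p0 by (intro matvec_nonneg) (auto simp: Tk_mat_def)
  have eps0: "0 \<le> eps"
    using eps zmin zmax lam by simp
  have pow: "lam ^ k \<le> 2 * s ^ k"
    unfolding s_def by (rule power_diff_ge_half[OF lam eps0 small])
  have "2 * eps \<le> 2 * real k * eps"
    using k1 eps0 by (intro mult_right_mono) auto
  then have s: "0 < s" "s \<le> lam"
    using small lam eps0 by (simp_all add: s_def)
  have "(\<Sum>v\<in>?S. e v) \<le> real (card {w1, w2}) * zmax"
    unfolding e_def using p p0 by (intro sum_removed_matvec_le[OF k1 _ zmax]) auto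
  also have "\<dots> \<le> 2 * zmax"
    using zmax by (intro mult_right_mono) (auto simp: card_insert_if)
  finally have esum: "(\<Sum>v\<in>?S. e v) \<le> 2 * zmax" .
  have "s \<le> spectral_radius_on ?S ?A"
  proof (rule spectral_radius_on_ge_perturbation_bounds[where M = ?M and p = p and y = y
        and lam = lam and e = e and n = k and pmin = zmin and ymax = z'max and E = "2 * zmax"])
    show "finite ?S"
      by (rule finite_adm_words)
    show "\<And>i j. 0 \<le> ?A i j \<and> ?A i j \<le> ?M i j"
      by (simp add: Tk_mat_def)
    show "\<And>v. v \<in> ?S \<Longrightarrow> matvec ?S ?M p v = lam * p v"
      unfolding p_def by (rule Tk_mat_right_eigenvector[OF k _ zr])
    show "\<And>u. u \<in> ?S \<Longrightarrow> (\<Sum>v\<in>?S. y v * ?M v u) = lam * y u"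
      unfolding y_def by (rule Tk_mat_left_eigenvector[OF k _ zl])
    show "\<And>v. v \<in> ?S \<Longrightarrow> (matvec ?S ?M ^^ k) e v \<le> (\<Sum>u\<in>?S. e u)"
      by (rule Tk_mat_pow_le_sum[OF k1]) (auto intro: e0)
    have "2 * zmax = lam ^ k / 2 * eps * zmin"
      using eps zmin lam by (simp add: field_simps)
    also have "\<dots> \<le> s ^ k * eps * zmin"
      using pow eps0 zmin by (intro mult_right_mono) auto
    finally show "2 * zmax \<le> s ^ k * (lam - s) * zmin"
      by (simp add: s_def)
    have "(\<Sum>v\<in>?S. y v) = lam ^ (k - 1) * (\<Sum>a<r. z' a)"
      unfolding y_def by (rule sum_adm_words_last[OF k1 zl])
    moreover have "lam ^ k = lam * lam ^ (k - 1)"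
      using k by simp
    ultimately have eq1: "zmin * (\<Sum>a<r. z' a) * lam ^ k = lam * zmin * (\<Sum>v\<in>?S. y v)"
      by (simp add: ac_simps)
    have eq2: "2 * real k * (2 * zmax) * z'max = 4 * real k * zmax * z'max"
      by (simp add: algebra_simps)
    show "2 * real k * (2 * zmax) * z'max < lam * zmin * (\<Sum>v\<in>?S. y v)"
      using large eq1 eq2 by linarith
  qed (use p y zmin z'max s pow esum e_def in auto)
  then show ?thesis
    by (simp add: s_def)
qed

lemma removed_words_radius_eventually:
  assumes r: "1 \<le> r" and irr: "irreducible01 r T" and lam1: "1 < PF_eigenvalue r T"
  obtains c K where "0 < c"
    and "\<And>k w1 w2. K \<le> k \<Longrightarrow>
      \<bar>spectral_radius_on (adm_words r T k) (Tk_mat r T k {w1, w2}) - PF_eigenvalue r T\<bar>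
        \<le> c / PF_eigenvalue r T ^ k"
proof -
  obtain z z' :: "nat \<Rightarrow> real" where z0: "\<And>a. a < r \<Longrightarrow> 0 < z a"
    and z'0: "\<And>a. a < r \<Longrightarrow> 0 < z' a"
    and zr: "\<And>a. a < r \<Longrightarrow> (\<Sum>b<r. of_bool (T a b) * z b) = PF_eigenvalue r T * z a"
    and zl: "\<And>b. b < r \<Longrightarrow> (\<Sum>a<r. z' a * of_bool (T a b)) = PF_eigenvalue r T * z' b"
    using PF_eigenvalue_eigenvectors[OF r irr] by blast
  define lam where "lam = PF_eigenvalue r T"
  note zr = zr[folded lam_def] and zl = zl[folded lam_def]
  have lam: "0 < lam"
    using lam1 by (simp add: lam_def)
  define zmin where "zmin = Min (z ` {..<r})"
  define zmax where "zmax = Max (z ` {..<r})"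
  define z'max where "z'max = Max (z' ` {..<r})"
  define Z' where "Z' = (\<Sum>a<r. z' a)"
  have r0: "0 < r"
    using r by simp
  then have ne: "{..<r} \<noteq> {}"
    by (simp add: lessThan_empty_iff)
  have zb: "zmin \<le> z a \<and> z a \<le> zmax" if "a < r" for a
    using that by (simp add: zmin_def zmax_def)
  have z'b: "0 < z' a \<and> z' a \<le> z'max" if "a < r" for a
    using that z'0 by (simp add: z'max_def)
  have zmin: "0 < zmin"
    using z0 ne by (simp add: zmin_def)
  have pos: "0 < zmax" "0 < z'max" "0 < Z'"
    using zb[OF r0] z'b[OF r0] zmin z'0 ne by (auto simp: Z'_def intro!: sum_pos)
  define c where "c = 4 * zmax / zmin"
  have c: "0 < c"
    using pos zmin by (simp add: c_def)
  define \<delta> where "\<delta> = min (lam / (2 * c)) (zmin * Z' / (4 * zmax * z'max))"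
  have \<delta>: "0 < \<delta>"
    using lam c zmin pos by (simp add: \<delta>_def)
  have "((\<lambda>k. of_nat k / lam ^ k) \<longlongrightarrow> 0) sequentially"
    by (rule lim_n_over_pown) (use lam1 in \<open>simp add: lam_def\<close>)
  from order_tendstoD(2)[OF this \<delta>]
  have "eventually (\<lambda>k. real k / lam ^ k < \<delta>) sequentially"
    by simp
  then obtain K where K: "\<And>k. K \<le> k \<Longrightarrow> real k / lam ^ k < \<delta>"
    by (auto simp: eventually_sequentially)
  show ?thesis
  proof (rule that[of c "max K 2"])
    show "0 < c"
      by (rule c)
    fix k w1 w2 assume kK: "max K 2 \<le> k"
    define m where "m = k - 2"
    have k: "k = Suc (Suc m)"
      using kK unfolding m_def by presburger
    have lamk: "0 < lam ^ k"
      using lam by simp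
    have "real k / lam ^ k < lam / (2 * c)" "real k / lam ^ k < zmin * Z' / (4 * zmax * z'max)"
      using K[of k] kK by (simp_all add: \<delta>_def)
    then have bounds: "real k / lam ^ k * (2 * c) < lam"
      "real k / lam ^ k * (4 * zmax * z'max) < zmin * Z'"
      using c pos by (simp_all add: pos_less_divide_eq)
    have small: "2 * real k * (c / lam ^ k) \<le> lam"
      using bounds(1) by (simp add: ac_simps)
    have "4 * real k * zmax * z'max / lam ^ k < zmin * Z'"
      using bounds(2) by (simp add: ac_simps)
    then have large: "4 * real k * zmax * z'max < zmin * Z' * lam ^ k"
      using lamk by (simp add: divide_less_eq)
    have eps: "c / lam ^ k = 4 * zmax / (zmin * lam ^ k)"
      unfolding c_def by simp
    have "lam - c / lam ^ k \<le> spectral_radius_on (adm_words r T k) (Tk_mat r T k {w1, w2})"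
      by (rule removed_words_radius_ge[OF k r lam zb zmin z'b zr zl eps small large[unfolded Z'_def]])
    moreover have "spectral_radius_on (adm_words r T k) (Tk_mat r T k {w1, w2}) \<le> lam"
      by (rule removed_words_radius_le[OF k r lam z'0 zl])
    ultimately have "\<bar>spectral_radius_on (adm_words r T k) (Tk_mat r T k {w1, w2}) - lam\<bar>
        \<le> c / lam ^ k"
      using c lamk by (simp add: abs_le_iff)
    then show "\<bar>spectral_radius_on (adm_words r T k) (Tk_mat r T k {w1, w2}) - PF_eigenvalue r T\<bar>
        \<le> c / PF_eigenvalue r T ^ k"
      unfolding lam_def .
  qed
qed

lemma removed_words_radius_uniform:
  assumes r: "1 \<le> r" and irr: "irreducible01 r T" and lam1: "1 < PF_eigenvalue r T"
  obtains C where "0 < C"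
    and "\<And>k w1 w2. 1 \<le> k \<Longrightarrow>
      \<bar>spectral_radius_on (adm_words r T k) (Tk_mat r T k {w1, w2}) - PF_eigenvalue r T\<bar>
        \<le> C / PF_eigenvalue r T ^ k"
proof -
  let ?PF = "PF_eigenvalue r T"
  let ?D = "\<lambda>k w1 w2. \<bar>spectral_radius_on (adm_words r T k) (Tk_mat r T k {w1, w2}) - ?PF\<bar>"
  obtain c K where c: "0 < c" and late: "\<And>k w1 w2. K \<le> k \<Longrightarrow> ?D k w1 w2 \<le> c / ?PF ^ k"
    using removed_words_radius_eventually[OF r irr lam1] by blast
  define C where "C = max c ((real r ^ K + ?PF) * ?PF ^ K)"
  show ?thesis
  proof (rule that[of C])
    show "0 < C"
      using c by (simp add: C_def)
    fix k :: nat and w1 w2 :: "nat list"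
    assume k: "1 \<le> k"
    show "?D k w1 w2 \<le> C / ?PF ^ k"
    proof (cases "K \<le> k")
      case True
      have "c / ?PF ^ k \<le> C / ?PF ^ k"
        using lam1 by (intro divide_right_mono) (auto simp: C_def)
      then show ?thesis
        using late[OF True, of w1 w2] by linarith
    next
      case False
      have "?D k w1 w2 \<le> real r ^ k + ?PF"
        using removed_words_radius_crude[OF r irr _ k] lam1 by simp
      also have "\<dots> \<le> (real r ^ K + ?PF) * ?PF ^ K / ?PF ^ k"
      proof -
        have "real r ^ k \<le> real r ^ K" "?PF ^ k \<le> ?PF ^ K"
          using False r lam1 by (simp_all add: power_increasing)
        then have "real r ^ k + ?PF \<le> (real r ^ K + ?PF) * 1"
          and "1 \<le> ?PF ^ K / ?PF ^ k"
          using lam1 by simp_all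
        moreover have "0 \<le> real r ^ K + ?PF"
          using lam1 by simp
        ultimately have "real r ^ k + ?PF \<le> (real r ^ K + ?PF) * (?PF ^ K / ?PF ^ k)"
          by (meson mult_left_mono order_trans)
        then show ?thesis
          by simp
      qed
      also have "\<dots> \<le> C / ?PF ^ k"
        using lam1 by (intro divide_right_mono) (auto simp: C_def)
      finally show ?thesis .
    qed
  qed
qed

theorem theorem5p3:
  fixes r :: nat and T :: "nat \<Rightarrow> nat \<Rightarrow> bool"
  assumes "r \<ge> 1"
    and "irreducible01 r T"
    and "PF_eigenvalue r T > 1"
  shows "\<exists>C C' :: real. \<exists>N :: nat. C > 0 \<and> C' > 0 \<and>
    (\<forall>k w1 w2. k \<ge> 1 \<longrightarrow> admissible r T (k + 1) w1 \<longrightarrow> admissible r T (k + 1) w2 \<longrightarrow>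
       d1 r T k w1 \<ge> N \<longrightarrow> d2 r T k w1 w2 \<ge> N \<longrightarrow>
       \<bar>spectral_radius_on (adm_words r T k) (Tk_mat r T k {w1, w2}) - PF_eigenvalue r T\<bar>
         \<le> C * inverse (PF_eigenvalue r T ^ k) *
            (1 + C' * PF_eigenvalue r T ^ delta r T k w1 w2))"
proof -
  let ?PF = "PF_eigenvalue r T"
  obtain C where C: "0 < C" and bound: "\<And>k w1 w2. 1 \<le> k \<Longrightarrow>
      \<bar>spectral_radius_on (adm_words r T k) (Tk_mat r T k {w1, w2}) - ?PF\<bar> \<le> C / ?PF ^ k"
    using removed_words_radius_uniform[OF assms] by blast
  show ?thesis
  proof (intro exI[of _ C] exI[of _ "0::nat"] conjI allI impI C)
    fix k :: nat and w1 w2 :: "nat list"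
    assume "1 \<le> k"
    have "C / ?PF ^ k = C * inverse (?PF ^ k) * 1"
      by (simp add: divide_inverse)
    also have "\<dots> \<le> C * inverse (?PF ^ k) * (1 + C * ?PF ^ delta r T k w1 w2)"
      using C assms(3) by (intro mult_left_mono) auto
    finally show "\<bar>spectral_radius_on (adm_words r T k) (Tk_mat r T k {w1, w2}) - ?PF\<bar>
        \<le> C * inverse (?PF ^ k) * (1 + C * ?PF ^ delta r T k w1 w2)"
      using bound[OF \<open>1 \<le> k\<close>, of w1 w2] by linarith
  qed
qed

end
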